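(* Let $(B,T)$ be an $n$-string tangle diagram which is adequate. Then the link diagram $L_T$ is adequate.
   Context: A link diagram is a generic projection of a link to $S^2$ with over/under information at each double point (crossing). At each crossing there are two ways to resolve: the $A$-resolution and the $A^{-1}$-resolution (Kauffman's convention: the $A$-resolution joins the two regions near the crossing that are swept out when the over-strand is rotated counterclockwise, and the $A^{-1}$-resolution joins the other two). Resolving every crossing by the $A$-resolution (resp. $A^{-1}$-resolution) yields a disjoint collection of circles called the all-$A$ (resp. all-$A^{-1}$) resolution; at each former crossing one records a grey segment joining the two arcs of the resolution that came from that crossing. A link diagram is $A$-adequate (resp. $A^{-1}$-adequate) if every grey segment of the all-$A$ (resp. all-$A^{-1}$) resolution has its two endpoints on distinct circles; it is adequate if it is both $A$-adequate and $A^{-1}$-adequate. An $n$-string tangle diagram $(B,T)$ is a diagram of a disk $B$ together with a set $T$ of $n$ arcs in $B$ (with crossings) whose $2n$ endpoints lie on $\partial B$ and are numbered $1,\dots,2n$ clockwise. It is adequate if, however the endpoints of $T$ are joined by pairwise disjoint planar arcs outside $B$, the resulting link diagram is adequate. Given $(B,T)$, let $(B^*,T^* )$ be its mirror image, with the endpoints of $T^*$ numbered $1,\dots,2n$ counterclockwise; $L_T$ is the link diagram obtained by gluing $B$ and $B^*$ along their boundaries so that endpoint $j$ of $T$ is attached to endpoint $j$ of $T^*$ for every $j$. *)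

theory Defs
  imports Main
begin

text \<open>A diagram on the sphere is encoded as a combinatorial map: a finite set of darts
  (half-edges) H, a fixed-point-free involution a pairing the two darts of each edge,
  and a permutation s of H giving the counterclockwise cyclic order of darts around each
  vertex.  Vertices are s-orbits, faces are orbits of s o a.\<close>

definition dorbit :: "('h \<Rightarrow> 'h) \<Rightarrow> 'h \<Rightarrow> 'h set" where
  "dorbit f x = range (\<lambda>k. (f ^^ k) x)"

definition map_rel :: "'h set \<Rightarrow> ('h \<Rightarrow> 'h) \<Rightarrow> ('h \<Rightarrow> 'h) \<Rightarrow> ('h \<times> 'h) set" where
  "map_rel H a s = {(x, y). x \<in> H \<and> (y = a x \<or> y = s x)}"

definition edge_involution :: "'h set \<Rightarrow> ('h \<Rightarrow> 'h) \<Rightarrow> bool" where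
  "edge_involution H a \<longleftrightarrow> (\<forall>h\<in>H. a h \<in> H \<and> a h \<noteq> h \<and> a (a h) = h)"

text \<open>Genus zero: V - E + F = 2 * (number of connected components).\<close>
definition planar_map :: "'h set \<Rightarrow> ('h \<Rightarrow> 'h) \<Rightarrow> ('h \<Rightarrow> 'h) \<Rightarrow> bool" where
  "planar_map H a s \<longleftrightarrow>
     finite H \<and> edge_involution H a \<and> bij_betw s H H \<and>
     int (card ((\<lambda>h. dorbit s h) ` H)) - int (card H div 2)
       + int (card ((\<lambda>h. dorbit (s \<circ> a) h) ` H))
     = 2 * int (card ((\<lambda>h. (map_rel H a s)\<^sup>* `` {h}) ` H))"

text \<open>A (generalised) link diagram: darts H, edge involution a, rotation s, and a set Ov of
  darts lying on the over-strand.  Vertices of valence 4 are crossings (Ov contains exactly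
  one pair of opposite darts there); vertices of valence 2 are mere points subdividing an
  edge (no crossing).\<close>
definition link_diagram :: "'h set \<Rightarrow> ('h \<Rightarrow> 'h) \<Rightarrow> ('h \<Rightarrow> 'h) \<Rightarrow> 'h set \<Rightarrow> bool" where
  "link_diagram H a s Ov \<longleftrightarrow> finite H \<and> edge_involution H a \<and> bij_betw s H H \<and> Ov \<subseteq> H \<and>
     (\<forall>h\<in>H. (s (s h) = h \<and> s h \<noteq> h \<and> h \<notin> Ov) \<or>
             ((s ^^ 4) h = h \<and> s (s h) \<noteq> h \<and> (h \<in> Ov \<longleftrightarrow> s (s h) \<in> Ov) \<and> (h \<in> Ov \<longleftrightarrow> s h \<notin> Ov)))"

text \<open>At a crossing with counterclockwise darts
  d0 (over), d1 (under), d2 (over), d3 (under): the A-resolution (Kauffman) merges the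
  regions swept by the over-strand rotated counterclockwise, i.e. the corners (d0,d1) and
  (d2,d3); so it joins d0 with d3 and d1 with d2.  The A^-1 resolution joins d0 with d1 and
  d2 with d3.  At 2-valent points the strand simply continues.\<close>
definition smoothA :: "'h set \<Rightarrow> ('h \<Rightarrow> 'h) \<Rightarrow> 'h set \<Rightarrow> 'h \<Rightarrow> 'h" where
  "smoothA H s Ov h = (if h \<in> Ov then inv_into H s h else s h)"

definition smoothAinv :: "'h set \<Rightarrow> ('h \<Rightarrow> 'h) \<Rightarrow> 'h set \<Rightarrow> 'h \<Rightarrow> 'h" where
  "smoothAinv H s Ov h =
     (if h \<in> Ov then s h else if s (s h) \<noteq> h then inv_into H s h else s h)"

definition same_circle :: "'h set \<Rightarrow> ('h \<Rightarrow> 'h) \<Rightarrow> ('h \<Rightarrow> 'h) \<Rightarrow> 'h \<Rightarrow> 'h \<Rightarrow> bool" where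
  "same_circle H a sm x y \<longleftrightarrow> (x, y) \<in> (map_rel H a sm)\<^sup>*"

text \<open>Grey segment at a crossing with over-dart h: in the all-A resolution it joins the
  arcs {h, s^-1 h} and {s h, s^2 h}; in the all-A^-1 resolution it joins the arcs
  {h, s h} and {s^-1 h, s^2 h}.\<close>
definition A_adequate :: "'h set \<Rightarrow> ('h \<Rightarrow> 'h) \<Rightarrow> ('h \<Rightarrow> 'h) \<Rightarrow> 'h set \<Rightarrow> bool" where
  "A_adequate H a s Ov \<longleftrightarrow> (\<forall>h\<in>Ov. \<not> same_circle H a (smoothA H s Ov) h (s h))"

definition Ainv_adequate :: "'h set \<Rightarrow> ('h \<Rightarrow> 'h) \<Rightarrow> ('h \<Rightarrow> 'h) \<Rightarrow> 'h set \<Rightarrow> bool" where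
  "Ainv_adequate H a s Ov \<longleftrightarrow>
     (\<forall>h\<in>Ov. \<not> same_circle H a (smoothAinv H s Ov) h (inv_into H s h))"

definition adequate :: "'h set \<Rightarrow> ('h \<Rightarrow> 'h) \<Rightarrow> ('h \<Rightarrow> 'h) \<Rightarrow> 'h set \<Rightarrow> bool" where
  "adequate H a s Ov \<longleftrightarrow> A_adequate H a s Ov \<and> Ainv_adequate H a s Ov"

text \<open>An n-string tangle diagram (B,T): crossing darts C with counterclockwise rotation sg
  (all orbits of size 4) and over-darts Ov; the darts of the tangle are Inl d (d in C) and
  Inr j for the endpoint j in {1..2n} on the boundary circle; al pairs the two ends of
  each edge.\<close>

definition tdarts :: "nat \<Rightarrow> 'd set \<Rightarrow> ('d + nat) set" where
  "tdarts n C = Inl ` C \<union> Inr ` {1..2*n}"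

text \<open>Capping the disk: the outside of B collapsed to one vertex whose darts are the
  endpoints; since they are numbered clockwise on the boundary of B, the counterclockwise
  rotation at the cap vertex is j -> j+1 (mod 2n).\<close>
definition cap_rot :: "nat \<Rightarrow> ('d \<Rightarrow> 'd) \<Rightarrow> 'd + nat \<Rightarrow> 'd + nat" where
  "cap_rot n sg x = (case x of Inl d \<Rightarrow> Inl (sg d)
                       | Inr j \<Rightarrow> Inr (if j = 2*n then 1 else Suc j))"

text \<open>Going straight along a strand: along an edge, or through a crossing.\<close>
definition strand_rel :: "nat \<Rightarrow> 'd set \<Rightarrow> ('d \<Rightarrow> 'd) \<Rightarrow> ('d + nat \<Rightarrow> 'd + nat) \<Rightarrow> (('d + nat) \<times> ('d + nat)) set" where
  "strand_rel n C sg al = {(x, y). x \<in> tdarts n C \<and>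
      (y = al x \<or> (\<exists>d. x = Inl d \<and> y = Inl (sg (sg d))))}"

definition tangle_diagram :: "nat \<Rightarrow> 'd set \<Rightarrow> ('d \<Rightarrow> 'd) \<Rightarrow> 'd set \<Rightarrow> ('d + nat \<Rightarrow> 'd + nat) \<Rightarrow> bool" where
  "tangle_diagram n C sg Ov al \<longleftrightarrow>
     finite C \<and> bij_betw sg C C \<and> Ov \<subseteq> C \<and>
     (\<forall>d\<in>C. (sg ^^ 4) d = d \<and> sg (sg d) \<noteq> d \<and>
             (d \<in> Ov \<longleftrightarrow> sg (sg d) \<in> Ov) \<and> (d \<in> Ov \<longleftrightarrow> sg d \<notin> Ov)) \<and>
     edge_involution (tdarts n C) al \<and>
     \<comment> \<open>T consists of arcs only: every strand reaches the boundary\<close>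
     (\<forall>x\<in>tdarts n C. \<exists>j\<in>{1..2*n}. (x, Inr j) \<in> (strand_rel n C sg al)\<^sup>*) \<and>
     \<comment> \<open>the diagram lies in the disk B with endpoints 1..2n in clockwise order\<close>
     planar_map (tdarts n C) al (cap_rot n sg)"

text \<open>Pairwise disjoint planar arcs outside B joining the endpoints = non-crossing perfect
  matchings of {1..2n}.\<close>
definition noncrossing_matching :: "nat \<Rightarrow> (nat \<Rightarrow> nat) \<Rightarrow> bool" where
  "noncrossing_matching n m \<longleftrightarrow>
     (\<forall>j\<in>{1..2*n}. m j \<in> {1..2*n} \<and> m j \<noteq> j \<and> m (m j) = j) \<and>
     \<not> (\<exists>i j k l. 1 \<le> i \<and> i < j \<and> j < k \<and> k < l \<and> l \<le> 2*n \<and> m i = k \<and> m j = l)"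

text \<open>Closure of the tangle by the matching m: each endpoint j becomes a 2-valent point
  with inner dart Inl (Inr j) and outer dart Inr j; outer arcs pair Inr j with Inr (m j).\<close>
definition cl_darts :: "nat \<Rightarrow> 'd set \<Rightarrow> (('d + nat) + nat) set" where
  "cl_darts n C = Inl ` tdarts n C \<union> Inr ` {1..2*n}"

definition cl_edge :: "('d + nat \<Rightarrow> 'd + nat) \<Rightarrow> (nat \<Rightarrow> nat) \<Rightarrow> ('d + nat) + nat \<Rightarrow> ('d + nat) + nat" where
  "cl_edge al m x = (case x of Inl y \<Rightarrow> Inl (al y) | Inr j \<Rightarrow> Inr (m j))"

definition cl_rot :: "('d \<Rightarrow> 'd) \<Rightarrow> ('d + nat) + nat \<Rightarrow> ('d + nat) + nat" where
  "cl_rot sg x = (case x of Inl (Inl d) \<Rightarrow> Inl (Inl (sg d))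
                           | Inl (Inr j) \<Rightarrow> Inr j
                           | Inr j \<Rightarrow> Inl (Inr j))"

definition cl_over :: "'d set \<Rightarrow> (('d + nat) + nat) set" where
  "cl_over Ov = (\<lambda>d. Inl (Inl d)) ` Ov"

definition adequate_tangle :: "nat \<Rightarrow> 'd set \<Rightarrow> ('d \<Rightarrow> 'd) \<Rightarrow> 'd set \<Rightarrow> ('d + nat \<Rightarrow> 'd + nat) \<Rightarrow> bool" where
  "adequate_tangle n C sg Ov al \<longleftrightarrow>
     (\<forall>m. noncrossing_matching n m \<longrightarrow>
          adequate (cl_darts n C) (cl_edge al m) (cl_rot sg) (cl_over Ov))"

text \<open>Darts of L_T: Inl (Inl d) crossing darts of T, Inl (Inr d) crossing darts of the
  mirror image T*, and Inr (j, True) / Inr (j, False) the two darts of the 2-valent point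
  on the common boundary circle where endpoint j of T meets endpoint j of T*.  The mirror
  image is the planar reflection: same edges and over/under data, reversed rotation.
  Since T* is numbered counterclockwise and the sphere orientation restricts to the planar
  orientation on both B and B*, T and T* appear on the sphere exactly as drawn.\<close>

definition LT_darts :: "nat \<Rightarrow> 'd set \<Rightarrow> (('d + 'd) + nat \<times> bool) set" where
  "LT_darts n C = (\<lambda>d. Inl (Inl d)) ` C \<union> (\<lambda>d. Inl (Inr d)) ` C \<union> Inr ` ({1..2*n} \<times> UNIV)"

definition LT_emb :: "bool \<Rightarrow> 'd + nat \<Rightarrow> ('d + 'd) + nat \<times> bool" where
  "LT_emb b x = (case x of Inl d \<Rightarrow> Inl (if b then Inl d else Inr d) | Inr j \<Rightarrow> Inr (j, b))"

definition LT_edge :: "('d + nat \<Rightarrow> 'd + nat) \<Rightarrow> ('d + 'd) + nat \<times> bool \<Rightarrow> ('d + 'd) + nat \<times> bool" where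
  "LT_edge al x = (case x of Inl (Inl d) \<Rightarrow> LT_emb True (al (Inl d))
                           | Inl (Inr d) \<Rightarrow> LT_emb False (al (Inl d))
                           | Inr (j, b) \<Rightarrow> LT_emb b (al (Inr j)))"

definition LT_rot :: "'d set \<Rightarrow> ('d \<Rightarrow> 'd) \<Rightarrow> ('d + 'd) + nat \<times> bool \<Rightarrow> ('d + 'd) + nat \<times> bool" where
  "LT_rot C sg x = (case x of Inl (Inl d) \<Rightarrow> Inl (Inl (sg d))
                            | Inl (Inr d) \<Rightarrow> Inl (Inr (inv_into C sg d))
                            | Inr (j, b) \<Rightarrow> Inr (j, \<not> b))"

definition LT_over :: "'d set \<Rightarrow> (('d + 'd) + nat \<times> bool) set" where
  "LT_over Ov = (\<lambda>d. Inl (Inl d)) ` Ov \<union> (\<lambda>d. Inl (Inr d)) ` Ov"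

end

(*
  Suppose a grey segment of L_T has both ends on one circle of the all-A (or all-A^-1) state.
  The segment lies in T or in its mirror image, and the state of L_T restricts on that half to
  a state of T (the opposite one on the mirror half).  Following the circle, the two ends of
  the segment are either joined inside B, or both lie on arcs of the state of T that run to the
  boundary.

  The arcs of a state of T are disjoint in the disk, so they join the endpoints 1, ..., 2n by a
  noncrossing matching, which pairs odd with even points.  Combinatorially this comes from
  Euler's formula for the map of T capped off by a vertex outside B: counting the cycles of a
  permutation composed with involutions shows that the first return of the faces of the state
  map to the boundary has n + 1 cycles, the number attained exactly by noncrossing matchings.

  An odd point can be joined to an even point by a noncrossing matching outside B.  Closing T
  by such a matching puts the two ends of the segment on one state circle of a closure of T,
  which contradicts the adequacy of (B, T).
*)

theory Submission
  imports Defs "HOL-Combinatorics.Transposition"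
begin

lemma dorbit_funpow: "(f ^^ k) x \<in> dorbit f x"
  unfolding dorbit_def by (rule rangeI)

lemma dorbit_self: "x \<in> dorbit f x"
  using dorbit_funpow[of 0 f x] by simp

lemma dorbit_step:
  assumes "y \<in> dorbit f x"
  shows "f y \<in> dorbit f x"
proof -
  obtain k where "y = (f ^^ k) x"
    using assms by (auto simp: dorbit_def)
  then show ?thesis
    using dorbit_funpow[of "Suc k" f x] by simp
qed

lemma dorbit_induct [consumes 1, case_names base step]:
  assumes "y \<in> dorbit f x" "P x" "\<And>z. z \<in> dorbit f x \<Longrightarrow> P z \<Longrightarrow> P (f z)"
  shows "P y"
proof -
  have "P ((f ^^ k) x)" for k
    by (induction k) (simp_all add: assms(2,3) dorbit_funpow)
  then show ?thesis
    using assms(1) by (auto simp: dorbit_def)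
qed

lemma dorbit_closed: "(\<And>z. z \<in> Y \<Longrightarrow> f z \<in> Y) \<Longrightarrow> x \<in> Y \<Longrightarrow> dorbit f x \<subseteq> Y"
  by (auto elim: dorbit_induct)

lemma dorbit_trans: "y \<in> dorbit f x \<Longrightarrow> dorbit f y \<subseteq> dorbit f x"
  by (rule dorbit_closed) (auto intro: dorbit_step)

lemma dorbit_cong:
  assumes "\<And>z. z \<in> dorbit f x \<Longrightarrow> f z = g z"
  shows "dorbit f x = dorbit g x"
proof -
  have "(f ^^ k) x = (g ^^ k) x" for k
  proof (induction k)
    case (Suc k)
    then show ?case
      using assms[OF dorbit_funpow[of k f x]] by simp
  qed simp
  then show ?thesis
    unfolding dorbit_def by simp
qed

lemma bij_betw_funpow_returns:
  assumes "finite X" "bij_betw f X X" "x \<in> X"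
  obtains p where "0 < p" "(f ^^ p) x = x"
proof -
  have iter_X: "(f ^^ k) x \<in> X" for k
    using bij_betw_apply[OF bij_betw_funpow[OF assms(2), of k] assms(3)] by simp
  have "finite (range (\<lambda>k. (f ^^ k) x))"
    using iter_X by (intro finite_subset[OF _ assms(1)]) auto
  then have "\<not> inj (\<lambda>k. (f ^^ k) x)"
    using finite_imageD infinite_UNIV_nat by blast
  then obtain i j where "i \<noteq> j" "(f ^^ i) x = (f ^^ j) x"
    unfolding inj_def by blast
  then obtain i j where ij: "i < j" "(f ^^ i) x = (f ^^ j) x"
    by (metis linorder_neqE_nat)
  have "(f ^^ i) ((f ^^ (j - i)) x) = (f ^^ (i + (j - i))) x"
    by (simp only: funpow_add o_apply)
  also have "\<dots> = (f ^^ i) x"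
    using ij by simp
  finally have "(f ^^ (j - i)) x = x"
    using inj_onD[OF bij_betw_imp_inj_on[OF bij_betw_funpow[OF assms(2), of i]]] iter_X assms(3)
    by blast
  then show thesis
    using that[of "j - i"] ij by simp
qed

lemma dorbit_sym:
  assumes "finite X" "bij_betw f X X" "x \<in> X" "y \<in> dorbit f x"
  shows "x \<in> dorbit f y"
proof -
  have return_step: "z \<in> dorbit f (f z)" if z: "z \<in> X" for z
  proof -
    obtain p where "0 < p" "(f ^^ p) z = z"
      using bij_betw_funpow_returns[OF assms(1,2) z] by blast
    then have "(f ^^ (p - 1)) (f z) = z"
      by (metis Suc_diff_1 funpow_Suc_right o_apply)
    then show ?thesis
      using dorbit_funpow by metis
  qed
  have "dorbit f x \<subseteq> X"
    using dorbit_closed[of X f x] bij_betw_apply[OF assms(2)] assms(3) by blast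
  with assms(4) show ?thesis
  proof (induction rule: dorbit_induct)
    case (step z)
    then show ?case
      using dorbit_trans[OF return_step] by blast
  qed (rule dorbit_self)
qed

lemma dorbit_eq:
  assumes "finite X" "bij_betw f X X" "x \<in> X" "y \<in> dorbit f x"
  shows "dorbit f y = dorbit f x"
  using dorbit_trans[OF assms(4)] dorbit_trans[OF dorbit_sym[OF assms]] by (rule subset_antisym)

definition orbit_count :: "('a \<Rightarrow> 'a) \<Rightarrow> 'a set \<Rightarrow> nat" where
  "orbit_count f X = card (dorbit f ` X)"

lemma orbit_count_cong:
  assumes "\<And>z. z \<in> X \<Longrightarrow> f z \<in> X" "\<And>z. z \<in> X \<Longrightarrow> f z = g z"
  shows "orbit_count f X = orbit_count g X"
proof -
  have "dorbit f x = dorbit g x" if "x \<in> X" for x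
    using dorbit_closed[of X f x] assms that by (intro dorbit_cong) auto
  then have "dorbit f ` X = dorbit g ` X"
    by (rule image_cong[OF refl])
  then show ?thesis
    unfolding orbit_count_def by simp
qed

lemma dorbit_conj:
  assumes "\<And>y. y \<in> Y \<Longrightarrow> g y \<in> Y" "\<And>y. y \<in> Y \<Longrightarrow> f (h y) = h (g y)" "y \<in> Y"
  shows "dorbit f (h y) = h ` dorbit g y"
proof -
  have "(f ^^ k) (h y) = h ((g ^^ k) y) \<and> (g ^^ k) y \<in> Y" for k
    by (induction k) (simp_all add: assms)
  then show ?thesis
    unfolding dorbit_def by (auto simp: image_image)
qed

lemma orbit_count_image:
  assumes "inj_on h Y" "\<And>y. y \<in> Y \<Longrightarrow> g y \<in> Y" "\<And>y. y \<in> Y \<Longrightarrow> f (h y) = h (g y)"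
  shows "orbit_count f (h ` Y) = orbit_count g Y"
proof -
  have orbit_Y: "dorbit g y \<subseteq> Y" if "y \<in> Y" for y
    using dorbit_closed[of Y g y] assms(2) that by blast
  have "dorbit f ` h ` Y = image h ` dorbit g ` Y"
    using dorbit_conj[of Y g f h, OF assms(2,3)] by (auto simp: image_image intro!: image_cong)
  moreover have "inj_on (image h) (dorbit g ` Y)"
    using inj_on_image_eq_iff[OF assms(1)] orbit_Y by (fastforce intro!: inj_onI)
  ultimately show ?thesis
    unfolding orbit_count_def by (simp add: card_image)
qed

lemma card_image_replace:
  assumes "finite X" "finite B" "g ` X \<subseteq> (f ` X - A) \<union> B" "A \<subseteq> f ` X"
  shows "card (g ` X) + card A \<le> card (f ` X) + card B"
proof -
  have fin: "finite (f ` X)" "finite A"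
    using assms(1,4) finite_subset by auto
  have "card (g ` X) \<le> card ((f ` X - A) \<union> B)"
    using card_mono[OF _ assms(3)] fin assms(2) by blast
  also have "\<dots> \<le> card (f ` X - A) + card B"
    by (rule card_Un_le)
  finally show ?thesis
    using card_Diff_subset[OF fin(2) assms(4)] card_mono[OF fin(1) assms(4)] by linarith
qed

lemma card_disjoint_family_le:
  assumes "finite A" "\<And>Q. Q \<in> F \<Longrightarrow> Q \<subseteq> A" "\<And>Q. Q \<in> F \<Longrightarrow> k \<le> card Q"
    and "pairwise disjnt F"
  shows "k * card F \<le> card A"
proof -
  have fin: "finite Q" if "Q \<in> F" for Q
    using finite_subset[OF assms(2)[OF that] assms(1)] .
  have "k * card F \<le> (\<Sum>Q\<in>F. card Q)"
    using sum_bounded_below[of F k card] assms(3) by (simp add: mult.commute)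
  also have "\<dots> = card (\<Union>F)"
    using card_Union_disjoint[OF assms(4) fin] by simp
  also have "\<dots> \<le> card A"
    using assms(1,2) by (intro card_mono) auto
  finally show ?thesis .
qed

lemma card_le_mult_fibres:
  assumes "finite B" "f ` A \<subseteq> B" "\<And>b. b \<in> B \<Longrightarrow> card {a \<in> A. f a = b} \<le> k"
  shows "card A \<le> k * card B"
proof -
  have "A = (\<Union>b\<in>B. {a \<in> A. f a = b})"
    using assms(2) by blast
  then have "card A \<le> (\<Sum>b\<in>B. card {a \<in> A. f a = b})"
    using card_UN_le[OF assms(1)] by metis
  also have "\<dots> \<le> k * card B"
    using sum_bounded_above[of B "\<lambda>b. card {a \<in> A. f a = b}" k] assms(3) by (simp add: mult.commute)
  finally show ?thesis .
qed

section \<open>Cycles of a permutation composed with a transposition\<close>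

lemma dorbit_transpose_outside:
  "a \<notin> dorbit f x \<Longrightarrow> b \<notin> dorbit f x \<Longrightarrow> dorbit (f \<circ> transpose a b) x = dorbit f x"
  by (rule dorbit_cong[symmetric]) (metis o_apply transpose_apply_other)

lemma dorbit_transpose_split:
  assumes "b \<in> dorbit f a"
  shows "dorbit f a \<subseteq> dorbit (f \<circ> transpose a b) a \<union> dorbit (f \<circ> transpose a b) b"
proof -
  define h where "h = f \<circ> transpose a b"
  have h_a: "h a = f b" and h_b: "h b = f a" and h_other: "z \<noteq> a \<Longrightarrow> z \<noteq> b \<Longrightarrow> h z = f z"
    for z by (simp_all add: h_def)
  have "x \<in> dorbit h a \<union> dorbit h b" if "x \<in> dorbit f a" for x
    using that
  proof (induction rule: dorbit_induct)
    case (step z)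
    consider "z = a" | "z = b" | "z \<noteq> a" "z \<noteq> b"
      by blast
    then show ?case
    proof cases
      case 1
      then show ?thesis
        using dorbit_step[OF dorbit_self, of h b] h_b by simp
    next
      case 2
      then show ?thesis
        using dorbit_step[OF dorbit_self, of h a] h_a by simp
    next
      case 3
      then have "f z = h z"
        using h_other by simp
      then show ?thesis
        using step(2) dorbit_step[of z h a] dorbit_step[of z h b] by auto
    qed
  qed (simp add: dorbit_self)
  then show ?thesis
    unfolding h_def[symmetric] by (rule subsetI)
qed

lemma dorbit_transpose_subset:
  "dorbit (f \<circ> transpose a b) a \<subseteq> dorbit f a \<union> dorbit f b"
proof (rule dorbit_closed)
  fix z assume z: "z \<in> dorbit f a \<union> dorbit f b"
  consider "z = a" | "z = b" | "z \<noteq> a" "z \<noteq> b"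
    by blast
  then show "(f \<circ> transpose a b) z \<in> dorbit f a \<union> dorbit f b"
  proof cases
    case 1
    then show ?thesis
      using dorbit_step[OF dorbit_self, of f b] by simp
  next
    case 2
    then show ?thesis
      using dorbit_step[OF dorbit_self, of f a] by simp
  next
    case 3
    then show ?thesis
      using z dorbit_step[of z f a] dorbit_step[of z f b] by auto
  qed
qed (simp add: dorbit_self)

lemma dorbit_transpose_merge:
  assumes "finite X" "bij_betw f X X" "a \<in> X" "b \<in> X" "b \<notin> dorbit f a"
  shows "dorbit (f \<circ> transpose a b) a = dorbit f a \<union> dorbit f b"
proof -
  define h where "h = f \<circ> transpose a b"
  have h_a: "h a = f b" and h_b: "h b = f a" and h_other: "z \<noteq> a \<Longrightarrow> z \<noteq> b \<Longrightarrow> h z = f z"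
    for z by (simp_all add: h_def)
  have a_Ob: "a \<notin> dorbit f b"
    using dorbit_sym[OF assms(1,2,4)] assms(5) by blast
  have "x \<in> dorbit h a" if "x \<in> dorbit f (f b)" for x
    using that
  proof (induction rule: dorbit_induct)
    case base
    show ?case
      using dorbit_step[OF dorbit_self, of h a] h_a by simp
  next
    case (step z)
    have "z \<noteq> a"
      using dorbit_trans[OF dorbit_step[OF dorbit_self[of b f]]] step(1) a_Ob by blast
    then show ?case
      using dorbit_step[OF step(2)] dorbit_step[OF dorbit_self, of h a] h_a h_other
      by (cases "z = b") auto
  qed
  then have Ob: "dorbit f b \<subseteq> dorbit h a"
    using dorbit_eq[OF assms(1,2,4) dorbit_step[OF dorbit_self[of b f]]] by blast
  have "x \<in> dorbit h a" if "x \<in> dorbit f a" for x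
    using that
  proof (induction rule: dorbit_induct)
    case (step z)
    have "z \<noteq> b"
      using step(1) assms(5) by auto
    then show ?case
      using dorbit_step[OF step(2)] dorbit_step[of b h a] Ob dorbit_self[of b f] h_b h_other
      by (cases "z = a") auto
  qed (rule dorbit_self)
  then show ?thesis
    using Ob dorbit_transpose_subset[of f a b] unfolding h_def by blast
qed

lemma orbit_count_transpose_same:
  assumes "finite X" "bij_betw f X X" "a \<in> X" "b \<in> X" "b \<in> dorbit f a"
  shows "orbit_count (f \<circ> transpose a b) X \<le> orbit_count f X + 1"
proof -
  define h where "h = f \<circ> transpose a b"
  have h_bij: "bij_betw h X X"
    unfolding h_def using bij_betw_trans[of "transpose a b" X X f] assms(2-4) by simp
  have Ob: "dorbit f b = dorbit f a"
    using dorbit_eq[OF assms(1-3,5)] .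
  have "dorbit h ` X \<subseteq> (dorbit f ` X - {dorbit f a}) \<union> {dorbit h a, dorbit h b}"
  proof
    fix Q assume "Q \<in> dorbit h ` X"
    then obtain x where x: "x \<in> X" "Q = dorbit h x"
      by auto
    show "Q \<in> (dorbit f ` X - {dorbit f a}) \<union> {dorbit h a, dorbit h b}"
    proof (cases "dorbit f x = dorbit f a")
      case True
      then have "x \<in> dorbit h a \<or> x \<in> dorbit h b"
        using dorbit_transpose_split[OF assms(5)] dorbit_self[of x f] unfolding h_def by blast
      then show ?thesis
        using x dorbit_eq[OF assms(1) h_bij assms(3)] dorbit_eq[OF assms(1) h_bij assms(4)] by blast
    next
      case False
      then have "a \<notin> dorbit f x" "b \<notin> dorbit f x"
        using dorbit_eq[OF assms(1,2) x(1)] Ob by metis+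
      then show ?thesis
        using x False dorbit_transpose_outside unfolding h_def by fastforce
    qed
  qed
  from card_image_replace[OF assms(1) _ this] assms(3)
  have "card (dorbit h ` X) + 1 \<le> card (dorbit f ` X) + card {dorbit h a, dorbit h b}"
    by simp
  moreover have "card {dorbit h a, dorbit h b} \<le> 2"
    by (simp add: card_insert_if)
  ultimately show ?thesis
    unfolding orbit_count_def h_def by simp
qed

lemma orbit_count_transpose_merge:
  assumes "finite X" "bij_betw f X X" "a \<in> X" "b \<in> X" "b \<notin> dorbit f a"
  shows "orbit_count (f \<circ> transpose a b) X + 1 \<le> orbit_count f X"
proof -
  define h where "h = f \<circ> transpose a b"
  have h_bij: "bij_betw h X X"
    unfolding h_def using bij_betw_trans[of "transpose a b" X X f] assms(2-4) by simp
  have merge: "dorbit h a = dorbit f a \<union> dorbit f b"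
    using dorbit_transpose_merge[OF assms] unfolding h_def .
  have ne: "dorbit f a \<noteq> dorbit f b"
    using assms(5) dorbit_self by metis
  have "dorbit h ` X \<subseteq> (dorbit f ` X - {dorbit f a, dorbit f b}) \<union> {dorbit f a \<union> dorbit f b}"
  proof
    fix Q assume "Q \<in> dorbit h ` X"
    then obtain x where x: "x \<in> X" "Q = dorbit h x"
      by auto
    show "Q \<in> (dorbit f ` X - {dorbit f a, dorbit f b}) \<union> {dorbit f a \<union> dorbit f b}"
    proof (cases "dorbit f x = dorbit f a \<or> dorbit f x = dorbit f b")
      case True
      then have "x \<in> dorbit h a"
        using merge dorbit_self[of x f] by auto
      then show ?thesis
        using x merge dorbit_eq[OF assms(1) h_bij assms(3)] by simp
    next
      case False
      then have "a \<notin> dorbit f x" "b \<notin> dorbit f x"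
        using dorbit_eq[OF assms(1,2) x(1)] by metis+
      then show ?thesis
        using x False dorbit_transpose_outside unfolding h_def by fastforce
    qed
  qed
  from card_image_replace[OF assms(1) _ this] assms(3,4) ne show ?thesis
    unfolding orbit_count_def h_def by simp
qed

lemma orbit_count_transpose_le:
  assumes "finite X" "bij_betw f X X" "a \<in> X" "b \<in> X"
  shows "orbit_count (f \<circ> transpose a b) X \<le> orbit_count f X + 1"
  using orbit_count_transpose_same[OF assms] orbit_count_transpose_merge[OF assms] by fastforce

definition involution_on :: "('a \<Rightarrow> 'a) \<Rightarrow> 'a set \<Rightarrow> bool" where
  "involution_on t X \<longleftrightarrow> (\<forall>x\<in>X. t x \<in> X \<and> t (t x) = x)"

definition moved :: "('a \<Rightarrow> 'a) \<Rightarrow> 'a set \<Rightarrow> 'a set" where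
  "moved t X = {x \<in> X. t x \<noteq> x}"

definition involution_pairs :: "('a \<Rightarrow> 'a) \<Rightarrow> 'a set \<Rightarrow> ('a \<times> 'a) set" where
  "involution_pairs t X = {(x, t x) | x. x \<in> X \<and> t x \<noteq> x}"

lemma involution_on_bij: "involution_on t X \<Longrightarrow> bij_betw t X X"
  unfolding involution_on_def by (rule bij_betw_byWitness[where f' = t]) auto

lemma involution_on_fix_pair:
  "involution_on t X \<Longrightarrow> a \<in> X \<Longrightarrow> involution_on (t(a := a, t a := t a)) X"
  unfolding involution_on_def by (auto, metis)

lemma moved_fix_pair:
  "involution_on t X \<Longrightarrow> moved (t(a := a, t a := t a)) X = moved t X - {a, t a}"
  unfolding moved_def involution_on_def by auto

lemma card_moved_fix_pair:
  assumes "finite X" "involution_on t X" "a \<in> moved t X"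
  shows "card (moved (t(a := a, t a := t a)) X) + 2 = card (moved t X)"
proof -
  have "{a, t a} \<subseteq> moved t X" "a \<noteq> t a"
    using assms(2,3) unfolding moved_def involution_on_def by auto
  moreover have "finite (moved t X)"
    using assms(1) unfolding moved_def by simp
  ultimately show ?thesis
    using moved_fix_pair[OF assms(2)] card_Diff_subset[of "{a, t a}" "moved t X"]
      card_mono[of "moved t X" "{a, t a}"] by simp
qed

lemma involution_fix_pair_transpose:
  "involution_on t X \<Longrightarrow> a \<in> X \<Longrightarrow> x \<in> X \<Longrightarrow> t x = (t(a := a, t a := t a)) (transpose a (t a) x)"
  unfolding involution_on_def transpose_def by auto

lemma involution_fix_pair_transpose_left:
  "involution_on t X \<Longrightarrow> a \<in> X \<Longrightarrow> x \<in> X \<Longrightarrow> t x = transpose a (t a) ((t(a := a, t a := t a)) x)"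
  unfolding involution_on_def transpose_def by (auto, metis)

lemma involution_pairs_fix_pair:
  assumes "involution_on t X" "a \<in> moved t X"
  shows "involution_pairs t X = involution_pairs (t(a := a, t a := t a)) X \<union> {(a, t a), (t a, a)}"
  using assms unfolding involution_pairs_def involution_on_def moved_def by (auto 4 3)

lemma sym_involution_pairs:
  assumes "involution_on t X"
  shows "sym (involution_pairs t X)"
proof (rule symI)
  fix x y assume "(x, y) \<in> involution_pairs t X"
  then have "x \<in> X" "y = t x" "t x \<noteq> x"
    by (auto simp: involution_pairs_def)
  then show "(y, x) \<in> involution_pairs t X"
    using assms unfolding involution_pairs_def involution_on_def by force
qed

lemma involution_on_induct [consumes 2, case_names identity fix_pair]:
  assumes "finite X" "involution_on t X"
    and identity: "\<And>t. involution_on t X \<Longrightarrow> moved t X = {} \<Longrightarrow> P t"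
    and fix_pair: "\<And>t a. involution_on t X \<Longrightarrow> a \<in> moved t X \<Longrightarrow> P (t(a := a, t a := t a)) \<Longrightarrow> P t"
  shows "P t"
  using assms(2)
proof (induction "card (moved t X)" arbitrary: t rule: less_induct)
  case less
  show ?case
  proof (cases "moved t X = {}")
    case False
    then obtain a where a: "a \<in> moved t X"
      by blast
    then have "a \<in> X"
      by (simp add: moved_def)
    then show ?thesis
      using fix_pair[OF less.prems a] less.hyps card_moved_fix_pair[OF assms(1) less.prems a]
        involution_on_fix_pair[OF less.prems] by simp
  qed (rule identity[OF less.prems])
qed

lemma even_card_moved:
  assumes "finite X" "involution_on t X"
  shows "even (card (moved t X))"
  using assms
proof (induction t rule: involution_on_induct)
  case (fix_pair t a)
  define t' where "t' = t(a := a, t a := t a)"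
  have "card (moved t X) = card (moved t' X) + 2"
    using card_moved_fix_pair[OF assms(1) fix_pair.hyps] unfolding t'_def by simp
  with fix_pair.IH[folded t'_def] show ?case
    by simp
qed simp

lemma orbit_count_comp_identity:
  assumes "bij_betw g X X" "moved t X = {}"
  shows "orbit_count (g \<circ> t) X = orbit_count g X"
  using assms bij_betw_apply[OF assms(1)] unfolding moved_def by (intro orbit_count_cong) auto

lemma orbit_count_comp_fix_pair:
  assumes "bij_betw g X X" "involution_on t X" "a \<in> X"
  shows "orbit_count (g \<circ> t) X = orbit_count ((g \<circ> t(a := a, t a := t a)) \<circ> transpose a (t a)) X"
  using involution_fix_pair_transpose[OF assms(2,3)] bij_betw_apply[OF assms(1)] assms(2)
  unfolding involution_on_def by (intro orbit_count_cong) auto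

lemma bij_betw_comp_fix_pair:
  assumes "bij_betw g X X" "involution_on t X" "a \<in> X"
  shows "bij_betw (g \<circ> t(a := a, t a := t a)) X X"
  using bij_betw_trans[OF involution_on_bij[OF involution_on_fix_pair[OF assms(2,3)]] assms(1)] .

lemma dorbit_comp_preserving:
  assumes "finite X" "bij_betw g X X" "x \<in> X" "\<And>z. z \<in> X \<Longrightarrow> t z \<in> dorbit g z"
  shows "dorbit (g \<circ> t) x \<subseteq> dorbit g x"
proof (rule dorbit_closed)
  fix z assume z: "z \<in> dorbit g x"
  have "z \<in> X"
    using dorbit_closed[of X g x] bij_betw_apply[OF assms(2)] assms(3) z by blast
  then have "t z \<in> dorbit g x"
    using assms(4)[of z] dorbit_eq[OF assms(1-3) z] by simp
  then show "(g \<circ> t) z \<in> dorbit g x"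
    using dorbit_step[of "t z" g x] by simp
qed (rule dorbit_self)

lemma preserves_dorbits_fix_pair:
  assumes "finite X" "bij_betw g X X" "involution_on t X" "a \<in> X" "t a \<in> dorbit g a"
    and preserving: "\<forall>x\<in>X. (t(a := a, t a := t a)) x \<in> dorbit g x"
  shows "\<forall>x\<in>X. t x \<in> dorbit g x"
proof
  fix x assume x: "x \<in> X"
  consider "x = a" | "x = t a" | "x \<noteq> a" "x \<noteq> t a"
    by blast
  then show "t x \<in> dorbit g x"
  proof cases
    case 2
    then show ?thesis
      using dorbit_sym[OF assms(1,2,4,5)] assms(3,4) unfolding involution_on_def by simp
  next
    case 3
    then show ?thesis
      using preserving x by force
  qed (use assms(5) in simp)
qed

text \<open>Composing with a transposition changes the number of cycles by one; the bound is
  attained only if every transposition of t splits a cycle of g.\<close>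

lemma orbit_count_comp_involution:
  assumes "finite X" "bij_betw g X X" "involution_on t X"
  shows "2 * orbit_count (g \<circ> t) X \<le> 2 * orbit_count g X + card (moved t X) \<and>
    (2 * orbit_count (g \<circ> t) X = 2 * orbit_count g X + card (moved t X) \<longrightarrow>
      (\<forall>x\<in>X. t x \<in> dorbit g x))"
  using assms(1,3)
proof (induction t rule: involution_on_induct)
  case (identity t)
  then have "orbit_count (g \<circ> t) X = orbit_count g X" "\<forall>x\<in>X. t x \<in> dorbit g x"
    using orbit_count_comp_identity[OF assms(2)] dorbit_self by (auto simp: moved_def)
  then show ?case
    using identity(2) by (simp add: comp_def)
next
  case (fix_pair t a)
  define b where "b = t a"
  define t' where "t' = t(a := a, b := b)"
  let ?k = "g \<circ> t'"
  have a: "a \<in> X" and b: "b \<in> X"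
    using fix_pair.hyps unfolding moved_def involution_on_def b_def by auto
  have k_bij: "bij_betw ?k X X"
    using bij_betw_comp_fix_pair[OF assms(2) fix_pair.hyps(1) a] unfolding t'_def b_def .
  have "orbit_count (g \<circ> t) X = orbit_count (?k \<circ> transpose a b) X"
    using orbit_count_comp_fix_pair[OF assms(2) fix_pair.hyps(1) a] unfolding t'_def b_def .
  moreover have U: "orbit_count (?k \<circ> transpose a b) X \<le> orbit_count ?k X + 1"
    by (rule orbit_count_transpose_le[OF assms(1) k_bij a b])
  moreover have IH: "2 * orbit_count ?k X \<le> 2 * orbit_count g X + card (moved t' X) \<and>
    (2 * orbit_count ?k X = 2 * orbit_count g X + card (moved t' X) \<longrightarrow> (\<forall>x\<in>X. t' x \<in> dorbit g x))"
    using fix_pair.IH unfolding t'_def b_def .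
  moreover have moved: "card (moved t' X) + 2 = card (moved t X)"
    using card_moved_fix_pair[OF assms(1) fix_pair.hyps] unfolding t'_def b_def .
  moreover have "\<forall>x\<in>X. t x \<in> dorbit g x"
    if eq: "2 * orbit_count (?k \<circ> transpose a b) X = 2 * orbit_count g X + card (moved t X)"
  proof -
    have t'_g: "\<forall>x\<in>X. t' x \<in> dorbit g x"
      using IH eq U moved by linarith
    have "b \<in> dorbit ?k a"
      using orbit_count_transpose_merge[OF assms(1) k_bij a b] IH eq U moved by linarith
    then have "t a \<in> dorbit g a"
      using dorbit_comp_preserving[OF assms(1,2) a] t'_g unfolding b_def by blast
    then show ?thesis
      using preserves_dorbits_fix_pair[OF assms(1,2) fix_pair.hyps(1) a] t'_g unfolding t'_def b_def by blast
  qed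
  ultimately show ?case
    by linarith
qed

definition class_count :: "('a \<times> 'a) set \<Rightarrow> 'a set \<Rightarrow> nat" where
  "class_count R X = card ((\<lambda>x. R\<^sup>* `` {x}) ` X)"

lemma sym_rtrancl_Image_eq:
  assumes "sym R" "(x, y) \<in> R\<^sup>*"
  shows "R\<^sup>* `` {x} = R\<^sup>* `` {y}"
proof -
  have "(y, x) \<in> R\<^sup>*"
    using assms sym_rtrancl[OF assms(1)] unfolding sym_def by blast
  then show ?thesis
    using assms(2) by (auto intro: rtrancl_trans)
qed

lemma class_count_antimono:
  assumes "finite X" "M \<subseteq> Q\<^sup>*"
  shows "class_count Q X \<le> class_count M X"
proof -
  have "Q\<^sup>* `` (M\<^sup>* `` {x}) = Q\<^sup>* `` {x}" for x
    using rtrancl_subset_rtrancl[OF assms(2)] by (auto intro: rtrancl_trans)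
  then have "(\<lambda>x. Q\<^sup>* `` {x}) ` X = (\<lambda>K. Q\<^sup>* `` K) ` (\<lambda>x. M\<^sup>* `` {x}) ` X"
    by (simp add: image_image)
  then show ?thesis
    unfolding class_count_def using card_image_le assms(1) by (metis finite_imageI)
qed

lemma rtrancl_Un_pair_Image:
  assumes "sym R" "R\<^sup>* `` {x} \<noteq> R\<^sup>* `` {a}" "R\<^sup>* `` {x} \<noteq> R\<^sup>* `` {b}"
  shows "(R \<union> {(a, b), (b, a)})\<^sup>* `` {x} = R\<^sup>* `` {x}"
proof
  show "R\<^sup>* `` {x} \<subseteq> (R \<union> {(a, b), (b, a)})\<^sup>* `` {x}"
    using rtrancl_mono[of R "R \<union> {(a, b), (b, a)}"] by auto
  have "y \<in> R\<^sup>* `` {x}" if "(x, y) \<in> (R \<union> {(a, b), (b, a)})\<^sup>*" for y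
    using that
  proof (induction rule: rtrancl_induct)
    case (step y z)
    then have "(x, y) \<in> R\<^sup>*"
      by simp
    then have "y \<noteq> a" "y \<noteq> b"
      using sym_rtrancl_Image_eq[OF assms(1)] assms(2,3) by blast+
    then show ?case
      using step by (auto intro: rtrancl_into_rtrancl)
  qed simp
  then show "(R \<union> {(a, b), (b, a)})\<^sup>* `` {x} \<subseteq> R\<^sup>* `` {x}"
    by blast
qed

lemma class_count_insert_pair:
  assumes "finite X" "sym R" "a \<in> X" "b \<in> X"
  shows "class_count R X \<le> class_count (R \<union> {(a, b), (b, a)}) X + 1"
proof -
  let ?K = "\<lambda>x. R\<^sup>* `` {x}" and ?K' = "\<lambda>x. (R \<union> {(a, b), (b, a)})\<^sup>* `` {x}"
  have "?K ` X \<subseteq> (?K' ` X - {?K' a}) \<union> {?K a, ?K b}"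
  proof
    fix Q assume "Q \<in> ?K ` X"
    then obtain x where x: "x \<in> X" "Q = ?K x"
      by auto
    show "Q \<in> (?K' ` X - {?K' a}) \<union> {?K a, ?K b}"
    proof (cases "?K x = ?K a \<or> ?K x = ?K b")
      case False
      then have same: "?K' x = ?K x"
        using rtrancl_Un_pair_Image[OF assms(2)] by blast
      have "?K' x \<noteq> ?K' a"
      proof
        assume "?K' x = ?K' a"
        then have "(x, a) \<in> R\<^sup>*"
          using same by blast
        then show False
          using False sym_rtrancl_Image_eq[OF assms(2)] by blast
      qed
      then show ?thesis
        using x same by auto
    qed (use x in auto)
  qed
  from card_image_replace[OF assms(1) _ this] assms(3)
  have "card (?K ` X) + 1 \<le> card (?K' ` X) + card {?K a, ?K b}"
    by simp
  moreover have "card {?K a, ?K b} \<le> 2"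
    by (simp add: card_insert_if)
  ultimately show ?thesis
    unfolding class_count_def by simp
qed

lemma dorbit_subset_class:
  assumes "\<And>z. z \<in> X \<Longrightarrow> g z \<in> X" "\<And>z. z \<in> X \<Longrightarrow> (z, g z) \<in> Q\<^sup>*" "x \<in> X"
  shows "dorbit g x \<subseteq> Q\<^sup>* `` {x}"
proof -
  have "dorbit g x \<subseteq> Q\<^sup>* `` {x} \<inter> X"
    by (rule dorbit_closed) (use assms in \<open>auto intro: rtrancl_trans\<close>)
  then show ?thesis
    by blast
qed

text \<open>A transposition that does not split a cycle of k merges two of them; it then joins
  two classes of R, or it lies within one class already.\<close>

lemma orbit_count_transpose_classes:
  assumes "finite X" "bij_betw k X X" "sym R" "\<And>z. z \<in> X \<Longrightarrow> (z, k z) \<in> R\<^sup>*"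
    and "a \<in> X" "b \<in> X"
  shows "2 * orbit_count (k \<circ> transpose a b) X + 4 * class_count R X
    \<le> 2 * orbit_count k X + 2 + 4 * class_count (R \<union> {(a, b), (b, a)}) X"
proof (cases "(a, b) \<in> R\<^sup>*")
  case True
  then have "(b, a) \<in> R\<^sup>*"
    using sym_rtrancl[OF assms(3)] unfolding sym_def by blast
  with True have "(R \<union> {(a, b), (b, a)})\<^sup>* = R\<^sup>*"
    by (intro rtrancl_subset) auto
  then show ?thesis
    using orbit_count_transpose_le[OF assms(1,2,5,6)] unfolding class_count_def by simp
next
  case False
  have "dorbit k a \<subseteq> R\<^sup>* `` {a}"
    using dorbit_subset_class[of X k R a] bij_betw_apply[OF assms(2)] assms(4,5) by blast
  then have "b \<notin> dorbit k a"
    using False by blast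
  then show ?thesis
    using orbit_count_transpose_merge[OF assms(1,2,5,6)]
      class_count_insert_pair[OF assms(1,3,5,6)] by linarith
qed

lemma orbit_count_comp_involution_classes:
  assumes "finite X" "bij_betw f X X" "sym R" "\<And>x. x \<in> X \<Longrightarrow> (x, f x) \<in> R\<^sup>*"
    and "involution_on t X"
  shows "2 * orbit_count (f \<circ> t) X + 4 * class_count R X
    \<le> 2 * orbit_count f X + card (moved t X) + 4 * class_count (R \<union> involution_pairs t X) X"
  using assms(1,5)
proof (induction t rule: involution_on_induct)
  case (identity t)
  then have "involution_pairs t X = {}"
    unfolding moved_def involution_pairs_def by auto
  then show ?case
    using orbit_count_comp_identity[OF assms(2) identity(2)] identity(2) by (simp add: comp_def)
next
  case (fix_pair t a)
  define b where "b = t a"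
  define t' where "t' = t(a := a, b := b)"
  let ?k = "f \<circ> t'" and ?R' = "R \<union> involution_pairs t' X"
  have a: "a \<in> X" and b: "b \<in> X"
    using fix_pair.hyps unfolding moved_def involution_on_def b_def by auto
  have t': "involution_on t' X"
    using involution_on_fix_pair[OF fix_pair.hyps(1) a] unfolding t'_def b_def .
  have k_bij: "bij_betw ?k X X"
    using bij_betw_comp_fix_pair[OF assms(2) fix_pair.hyps(1) a] unfolding t'_def b_def .
  have k_step: "(z, ?k z) \<in> ?R'\<^sup>*" if z: "z \<in> X" for z
  proof -
    have "(z, t' z) \<in> ?R'\<^sup>*"
      using z unfolding involution_pairs_def by (cases "t' z = z") auto
    moreover have "(t' z, f (t' z)) \<in> ?R'\<^sup>*"
      using t' z assms(4) rtrancl_mono[of R ?R'] unfolding involution_on_def by blast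
    ultimately show ?thesis
      by (simp add: rtrancl_trans)
  qed
  have "orbit_count (f \<circ> t) X = orbit_count (?k \<circ> transpose a b) X"
    using orbit_count_comp_fix_pair[OF assms(2) fix_pair.hyps(1) a] unfolding t'_def b_def .
  moreover have "card (moved t' X) + 2 = card (moved t X)"
    using card_moved_fix_pair[OF assms(1) fix_pair.hyps] unfolding t'_def b_def .
  moreover have "2 * orbit_count ?k X + 4 * class_count R X
    \<le> 2 * orbit_count f X + card (moved t' X) + 4 * class_count ?R' X"
    using fix_pair.IH unfolding t'_def b_def .
  moreover have "sym ?R'"
    using assms(3) sym_involution_pairs[OF t'] by (rule sym_Un)
  note orbit_count_transpose_classes[OF assms(1) k_bij this k_step a b]
  moreover have "R \<union> involution_pairs t X = ?R' \<union> {(a, b), (b, a)}"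
    using involution_pairs_fix_pair[OF fix_pair.hyps] unfolding t'_def b_def by auto
  then have "class_count (R \<union> involution_pairs t X) X = class_count (?R' \<union> {(a, b), (b, a)}) X"
    by simp
  ultimately show ?case
    by linarith
qed

section \<open>First return maps\<close>

definition return_time :: "('a \<Rightarrow> 'a) \<Rightarrow> 'a set \<Rightarrow> 'a \<Rightarrow> nat" where
  "return_time f S x = (LEAST k. 0 < k \<and> (f ^^ k) x \<in> S)"

definition first_return :: "('a \<Rightarrow> 'a) \<Rightarrow> 'a set \<Rightarrow> 'a \<Rightarrow> 'a" where
  "first_return f S x = (f ^^ return_time f S x) x"

lemma return_time_le: "0 < k \<Longrightarrow> (f ^^ k) x \<in> S \<Longrightarrow> return_time f S x \<le> k"
  unfolding return_time_def by (simp add: Least_le)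

lemma funpow_before_return: "0 < i \<Longrightarrow> i < return_time f S x \<Longrightarrow> (f ^^ i) x \<notin> S"
  unfolding return_time_def using not_less_Least by blast

lemma return_time_eqI:
  assumes "0 < T" "(f ^^ T) x \<in> S" "\<And>i. 0 < i \<Longrightarrow> i < T \<Longrightarrow> (f ^^ i) x \<notin> S"
  shows "return_time f S x = T"
proof -
  have "T \<le> k" if "0 < k \<and> (f ^^ k) x \<in> S" for k
    using that assms(3)[of k] by (cases "k < T") auto
  then show ?thesis
    unfolding return_time_def using assms(1,2) by (intro Least_equality) auto
qed

lemma first_return_in_dorbit: "first_return f S x \<in> dorbit f x"
  unfolding first_return_def by (rule dorbit_funpow)

context
  fixes X S :: "'a set" and f :: "'a \<Rightarrow> 'a"
  assumes fin: "finite X" and f_bij: "bij_betw f X X" and S_sub: "S \<subseteq> X"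
begin

lemma return_time_pos_first_return_in:
  assumes "x \<in> S"
  shows "0 < return_time f S x \<and> first_return f S x \<in> S"
proof -
  obtain p where "0 < p" "(f ^^ p) x = x"
    using bij_betw_funpow_returns[OF fin f_bij] S_sub assms by blast
  then have "0 < p \<and> (f ^^ p) x \<in> S"
    using assms by simp
  then show ?thesis
    unfolding first_return_def return_time_def by (rule LeastI)
qed

lemma return_time_pos: "x \<in> S \<Longrightarrow> 0 < return_time f S x"
  using return_time_pos_first_return_in by blast

lemma first_return_in: "x \<in> S \<Longrightarrow> first_return f S x \<in> S"
  using return_time_pos_first_return_in by blast

lemma funpow_in_dorbit_first_return:
  "x \<in> S \<Longrightarrow> (f ^^ k) x \<in> S \<Longrightarrow> (f ^^ k) x \<in> dorbit (first_return f S) x"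
proof (induction k arbitrary: x rule: less_induct)
  case (less k)
  show ?case
  proof (cases "k = 0")
    case False
    define r where "r = return_time f S x"
    have r: "0 < r" "r \<le> k"
      using return_time_pos[OF less.prems(1)] return_time_le[of k f x S] False less.prems(2)
      unfolding r_def by simp_all
    have split: "(f ^^ k) x = (f ^^ (k - r)) (first_return f S x)"
    proof -
      have "(f ^^ (k - r)) ((f ^^ r) x) = (f ^^ (k - r + r)) x"
        by (simp only: funpow_add o_apply)
      then show ?thesis
        using r unfolding first_return_def r_def[symmetric] by simp
    qed
    have step: "first_return f S x \<in> dorbit (first_return f S) x"
      by (rule dorbit_step[OF dorbit_self])
    show ?thesis
    proof (cases "r = k")
      case False
      then have "(f ^^ (k - r)) (first_return f S x) \<in> dorbit (first_return f S) (first_return f S x)"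
        using less.IH[of "k - r"] r split less.prems first_return_in by simp
      then show ?thesis
        using split dorbit_trans[OF step] by auto
    qed (use split step in simp)
  qed (simp add: dorbit_self)
qed

lemma dorbit_first_return:
  assumes "x \<in> S"
  shows "dorbit (first_return f S) x = dorbit f x \<inter> S"
proof
  show "dorbit (first_return f S) x \<subseteq> dorbit f x \<inter> S"
  proof (rule dorbit_closed)
    fix z assume "z \<in> dorbit f x \<inter> S"
    then show "first_return f S z \<in> dorbit f x \<inter> S"
      using first_return_in first_return_in_dorbit[of f S z] dorbit_trans[of z f x] by blast
  qed (simp add: assms dorbit_self)
  show "dorbit f x \<inter> S \<subseteq> dorbit (first_return f S) x"
    using funpow_in_dorbit_first_return[OF assms] unfolding dorbit_def by auto
qed

lemma orbit_count_first_return: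
  "orbit_count (first_return f S) S = card {Q \<in> dorbit f ` X. Q \<inter> S \<noteq> {}}"
proof -
  let ?A = "{Q \<in> dorbit f ` X. Q \<inter> S \<noteq> {}}"
  have orbit_eq: "dorbit f z = dorbit f y" if "y \<in> X" "z \<in> dorbit f y" for y z
    using dorbit_eq[OF fin f_bij that] .
  have "dorbit (first_return f S) ` S = (\<lambda>Q. Q \<inter> S) ` ?A"
  proof (intro equalityI subsetI)
    fix Q assume "Q \<in> dorbit (first_return f S) ` S"
    then obtain x where "x \<in> S" "Q = dorbit f x \<inter> S"
      using dorbit_first_return by auto
    then show "Q \<in> (\<lambda>Q. Q \<inter> S) ` ?A"
      using S_sub dorbit_self[of x f] by blast
  next
    fix Q assume "Q \<in> (\<lambda>Q. Q \<inter> S) ` ?A"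
    then obtain y z where "y \<in> X" "Q = dorbit f y \<inter> S" "z \<in> dorbit f y" "z \<in> S"
      by auto
    then show "Q \<in> dorbit (first_return f S) ` S"
      using orbit_eq dorbit_first_return by (metis image_eqI)
  qed
  moreover have "inj_on (\<lambda>Q. Q \<inter> S) ?A"
  proof (rule inj_onI)
    fix P Q assume "P \<in> ?A" "Q \<in> ?A" "P \<inter> S = Q \<inter> S"
    then obtain y y' z where "y \<in> X" "P = dorbit f y" "y' \<in> X" "Q = dorbit f y'"
      "z \<in> P" "z \<in> Q"
      by blast
    then show "P = Q"
      using orbit_eq by metis
  qed
  ultimately show ?thesis
    unfolding orbit_count_def by (simp add: card_image)
qed

end

text \<open>For p = s \<circ> a with a and s involutive (s only off S), the walk of p from x back to S,
  read backwards, is the walk of p from the partner e of x.\<close>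

lemma comp_involutions_reverse_walk:
  assumes p: "\<And>y. p y = s (a y)"
    and a: "involution_on a X" and s: "involution_on s (X - S)" "\<And>y. y \<in> S \<Longrightarrow> s y \<in> S"
    and walk_X: "\<And>i. (p ^^ i) x \<in> X"
    and walk_out: "\<And>i. 0 < i \<Longrightarrow> i \<le> T \<Longrightarrow> (p ^^ i) x \<notin> S"
    and e: "a ((p ^^ T) x) = e"
  shows "i \<le> T \<Longrightarrow> (p ^^ Suc i) e = s ((p ^^ (T - i)) x)"
proof (induction i)
  case 0
  have "a e = a (a ((p ^^ T) x))"
    using e by simp
  also have "\<dots> = (p ^^ T) x"
    using a walk_X[of T] unfolding involution_on_def by simp
  finally show ?case
    using p[of e] by simp
next
  case (Suc i)
  define j where "j = T - Suc i"
  have j: "T - i = Suc j"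
    using Suc.prems unfolding j_def by simp
  have "(p ^^ Suc j) x \<notin> S"
    using walk_out[of "Suc j"] j by simp
  then have out: "a ((p ^^ j) x) \<notin> S"
    using s(2) p[of "(p ^^ j) x"] by auto
  have "a ((p ^^ j) x) \<in> X"
    using a walk_X unfolding involution_on_def by blast
  then have "s ((p ^^ Suc j) x) = a ((p ^^ j) x)"
    using s(1) out p[of "(p ^^ j) x"] unfolding involution_on_def by simp
  then have "(p ^^ Suc (Suc i)) e = s (a (a ((p ^^ j) x)))"
    using Suc.IH Suc.prems j p[of "(p ^^ Suc i) e"] by simp
  also have "\<dots> = s ((p ^^ (T - Suc i)) x)"
    using a walk_X unfolding involution_on_def j_def by simp
  finally show ?case .
qed

lemma first_return_reverse:
  assumes fin: "finite X" and a: "involution_on a X" and s_bij: "bij_betw s X X" and S: "S \<subseteq> X"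
    and s: "\<And>y. y \<in> S \<Longrightarrow> s y \<in> S" "involution_on s (X - S)"
    and x: "x \<in> S" and e: "e \<in> S" "s e = first_return (s \<circ> a) S x"
  shows "first_return (s \<circ> a) S e = s x"
proof -
  define p where "p = s \<circ> a"
  have p_apply: "p y = s (a y)" for y
    by (simp add: p_def)
  have p_bij: "bij_betw p X X"
    unfolding p_def using bij_betw_trans[OF involution_on_bij[OF a] s_bij] .
  have walk_X: "(p ^^ i) y \<in> X" if "y \<in> X" for i y
    using bij_betw_apply[OF bij_betw_funpow[OF p_bij, of i] that] .
  obtain T where T: "return_time p S x = Suc T"
    using return_time_pos[OF fin p_bij S x] gr0_implies_Suc by blast
  have "s (a ((p ^^ T) x)) = s e"
    using e(2) T unfolding first_return_def p_def[symmetric] by (simp add: p_apply)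
  then have ae: "a ((p ^^ T) x) = e"
    using bij_betw_imp_inj_on[OF s_bij] a walk_X[OF subsetD[OF S x]] e(1) S
    unfolding involution_on_def inj_on_def by blast
  have before: "(p ^^ i) x \<notin> S" if "0 < i" "i \<le> T" for i
    using funpow_before_return[of i p S x] T that by simp
  note reverse = comp_involutions_reverse_walk[OF p_apply a s(2,1) walk_X[OF subsetD[OF S x]]
      before ae]
  have out: "(p ^^ i) e \<notin> S" if "0 < i" "i < Suc T" for i
  proof -
    have "(p ^^ (T - (i - 1))) x \<in> X - S"
      using before[of "T - (i - 1)"] that walk_X S x by auto
    then show ?thesis
      using reverse[of "i - 1"] that s(2) unfolding involution_on_def by auto
  qed
  have "return_time p S e = Suc T"
    using return_time_eqI[of "Suc T" p e S] reverse[of T] s(1)[OF x] out by simp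
  then show ?thesis
    using reverse[of T] unfolding first_return_def p_def[symmetric] by simp
qed

section \<open>Planar involutions of a cycle\<close>

text \<open>An involution t of the points 1, ..., 2n of a cycle is a noncrossing matching exactly
  when succ_cyc n \<circ> t has the maximal number n + 1 of cycles.\<close>

definition succ_cyc :: "nat \<Rightarrow> nat \<Rightarrow> nat" where
  "succ_cyc n j = (if j = 2 * n then 1 else Suc j)"

lemma bij_succ_cyc: "bij_betw (succ_cyc n) {1..2*n} {1..2*n}"
  by (rule bij_betw_byWitness[where f' = "\<lambda>j. if j = 1 then 2 * n else j - 1"])
    (auto simp: succ_cyc_def)

lemma funpow_succ_cyc: "1 \<le> j \<Longrightarrow> j + k \<le> 2 * n \<Longrightarrow> (succ_cyc n ^^ k) j = j + k"
  by (induction k) (auto simp: succ_cyc_def)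

lemma dorbit_succ_cyc:
  assumes "j \<in> {1..2*n}"
  shows "dorbit (succ_cyc n) j = {1..2*n}"
proof
  show "dorbit (succ_cyc n) j \<subseteq> {1..2*n}"
    using assms bij_betw_apply[OF bij_succ_cyc] by (intro dorbit_closed) auto
  have from_1: "i \<in> dorbit (succ_cyc n) 1" if "i \<in> {1..2*n}" for i
    using dorbit_funpow[of "i - 1" "succ_cyc n" 1] funpow_succ_cyc[of 1 "i - 1" n] that by simp
  have "1 \<in> {1..2*n}"
    using assms by simp
  then have "1 \<in> dorbit (succ_cyc n) j"
    using dorbit_sym[OF finite_atLeastAtMost bij_succ_cyc _ from_1[OF assms]] by blast
  then show "{1..2*n} \<subseteq> dorbit (succ_cyc n) j"
    using from_1 dorbit_trans[of 1 "succ_cyc n" j] by blast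
qed

lemma orbit_count_succ_cyc:
  assumes "1 \<le> n"
  shows "orbit_count (succ_cyc n) {1..2*n} = 1"
proof -
  have "dorbit (succ_cyc n) ` {1..2*n} = {{1..2*n}}"
    using assms dorbit_succ_cyc by force
  then show ?thesis
    unfolding orbit_count_def by simp
qed

lemma fixpoint_free_if_many_cycles:
  assumes t: "involution_on t {1..2*n}" and many: "n + 1 \<le> orbit_count (succ_cyc n \<circ> t) {1..2*n}"
  shows "moved t {1..2*n} = {1..2*n}"
proof (cases "n = 0")
  case False
  have "2 * orbit_count (succ_cyc n \<circ> t) {1..2*n}
    \<le> 2 * orbit_count (succ_cyc n) {1..2*n} + card (moved t {1..2*n})"
    using orbit_count_comp_involution[OF _ bij_succ_cyc t] by simp
  then have "card {1..2*n} \<le> card (moved t {1..2*n})"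
    using many orbit_count_succ_cyc False by simp
  then show ?thesis
    by (intro card_seteq) (auto simp: moved_def)
qed (simp add: moved_def)

lemma dorbit_succ_cyc_transpose:
  assumes "1 \<le> j" "j < k" "k \<le> 2 * n" "x \<in> {j<..k}"
  shows "dorbit (succ_cyc n \<circ> transpose j k) x \<subseteq> {j<..k}"
  using assms by (intro dorbit_closed) (auto simp: succ_cyc_def transpose_def)

text \<open>Removing the arc {j, t j} splits the cycle in two, and the other arcs of t stay within
  these two cycles.\<close>

lemma fix_pair_preserving_if_many_cycles:
  assumes t: "involution_on t {1..2*n}" and many: "n + 1 \<le> orbit_count (succ_cyc n \<circ> t) {1..2*n}"
    and j: "j \<in> {1..2*n}"
  shows "\<forall>x\<in>{1..2*n}. (t(j := j, t j := t j)) x \<in> dorbit (succ_cyc n \<circ> transpose j (t j)) x"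
proof -
  let ?I = "{1..2*n}" and ?t' = "t(j := j, t j := t j)" and ?g = "succ_cyc n \<circ> transpose j (t j)"
  have tj: "t j \<in> ?I" and j_moved: "j \<in> moved t ?I"
    using j t fixpoint_free_if_many_cycles[OF t many] unfolding involution_on_def by auto
  have t': "involution_on ?t' ?I" "card (moved ?t' ?I) + 2 = card (moved t ?I)"
    using involution_on_fix_pair[OF t j] card_moved_fix_pair[OF _ t j_moved] by simp_all
  have g_bij: "bij_betw ?g ?I ?I"
    using j tj by (intro bij_betw_trans[OF _ bij_succ_cyc] bij_betw_transpose_iff) blast
  have "orbit_count ?g ?I \<le> orbit_count (succ_cyc n) ?I + 1"
    by (rule orbit_count_transpose_le[OF _ bij_succ_cyc j tj]) simp
  then have "orbit_count ?g ?I \<le> 2"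
    using orbit_count_succ_cyc j by simp
  moreover have "card (moved t ?I) = 2 * n"
    using fixpoint_free_if_many_cycles[OF t many] by simp
  moreover have "orbit_count (succ_cyc n \<circ> t) ?I = orbit_count (?g \<circ> ?t') ?I"
  proof (rule orbit_count_cong)
    fix z assume z: "z \<in> ?I"
    show "(succ_cyc n \<circ> t) z \<in> ?I"
      using z t bij_betw_apply[OF bij_succ_cyc] unfolding involution_on_def by simp
    show "(succ_cyc n \<circ> t) z = (?g \<circ> ?t') z"
      using involution_fix_pair_transpose_left[OF t j z] by (simp del: fun_upd_apply)
  qed
  ultimately show ?thesis
    using orbit_count_comp_involution[OF _ g_bij t'(1)] many t'(2) by fastforce
qed

lemma odd_even_if_many_cycles_lt:
  assumes t: "involution_on t {1..2*n}" and many: "n + 1 \<le> orbit_count (succ_cyc n \<circ> t) {1..2*n}"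
    and j: "1 \<le> j" "j < t j" "t j \<le> 2 * n"
  shows "odd j \<longleftrightarrow> even (t j)"
proof -
  let ?I = "{1..2*n}" and ?J = "{j<..<t j}"
  have jI: "j \<in> ?I" and t_tj: "t (t j) = j"
    using j t unfolding involution_on_def by auto
  note preserving = fix_pair_preserving_if_many_cycles[OF t many jI]
  have "t x \<in> ?J \<and> t x \<noteq> x" if x: "x \<in> ?J" for x
  proof -
    have xI: "x \<in> ?I" and "x \<noteq> j" "x \<noteq> t j"
      using x j by auto
    then have "t x \<in> dorbit (succ_cyc n \<circ> transpose j (t j)) x"
      using preserving by fastforce
    moreover have "t x \<noteq> x"
      using fixpoint_free_if_many_cycles[OF t many] xI unfolding moved_def by blast
    moreover have "t x \<noteq> t j"
      using t xI \<open>x \<noteq> j\<close> t_tj unfolding involution_on_def by metis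
    ultimately show ?thesis
      using dorbit_succ_cyc_transpose[of j "t j" n x] j x by auto
  qed
  then have "involution_on t ?J" "moved t ?J = ?J"
    using t j unfolding involution_on_def moved_def by auto
  then have "even (card ?J)"
    using even_card_moved[of ?J t] by simp
  then show ?thesis
    using j by simp
qed

lemma odd_even_if_many_cycles:
  assumes t: "involution_on t {1..2*n}" and many: "n + 1 \<le> orbit_count (succ_cyc n \<circ> t) {1..2*n}"
    and j: "j \<in> {1..2*n}"
  shows "odd j \<longleftrightarrow> even (t j)"
proof -
  have tj: "t j \<in> {1..2*n}" "t (t j) = j" "t j \<noteq> j"
    using t j fixpoint_free_if_many_cycles[OF t many] unfolding involution_on_def moved_def by auto
  show ?thesis
  proof (cases "j < t j")
    case False
    then show ?thesis
      using odd_even_if_many_cycles_lt[OF t many, of "t j"] tj j by auto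
  qed (use odd_even_if_many_cycles_lt[OF t many, of j] j tj in auto)
qed

section \<open>Existence of noncrossing matchings\<close>

definition pred_cyc :: "nat \<Rightarrow> nat \<Rightarrow> nat" where
  "pred_cyc n j = (if j = 1 then 2 * n else j - 1)"

lemma succ_cyc_pred_cyc: "j \<in> {1..2*n} \<Longrightarrow> succ_cyc n (pred_cyc n j) = j"
  and pred_cyc_succ_cyc: "j \<in> {1..2*n} \<Longrightarrow> pred_cyc n (succ_cyc n j) = j"
  and pred_cyc_in: "j \<in> {1..2*n} \<Longrightarrow> pred_cyc n j \<in> {1..2*n}"
  and succ_cyc_in: "j \<in> {1..2*n} \<Longrightarrow> succ_cyc n j \<in> {1..2*n}"
  by (auto simp: succ_cyc_def pred_cyc_def)

lemma noncrossing_matchingI: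
  assumes match: "\<And>j. j \<in> {1..2*n} \<Longrightarrow> m j \<in> {1..2*n} \<and> m j \<noteq> j \<and> m (m j) = j"
    and pq: "m p = q" "m q = p"
    and adjacent: "\<And>j. j \<in> {1..2*n} \<Longrightarrow> j \<noteq> p \<Longrightarrow> j \<noteq> q \<Longrightarrow>
      m j = succ_cyc n j \<or> j = succ_cyc n (m j)"
  shows "noncrossing_matching n m"
proof -
  have long: "j \<in> {p, q}" if "1 \<le> j" "j + 1 < m j" "m j \<le> 2 * n" "m j < 2 * n \<or> 1 < j" for j
  proof (rule ccontr)
    assume "j \<notin> {p, q}"
    then have "m j = succ_cyc n j \<or> j = succ_cyc n (m j)"
      using adjacent that by simp
    then show False
      using that by (auto simp: succ_cyc_def split: if_splits)
  qed
  have "\<not> (1 \<le> i \<and> i < j \<and> j < k \<and> k < l \<and> l \<le> 2 * n \<and> m i = k \<and> m j = l)" for i j k l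
  proof
    assume h: "1 \<le> i \<and> i < j \<and> j < k \<and> k < l \<and> l \<le> 2 * n \<and> m i = k \<and> m j = l"
    then have "i \<in> {p, q}" "j \<in> {p, q}"
      using long[of i] long[of j] by auto
    then show False
      using h pq by auto
  qed
  then show ?thesis
    unfolding noncrossing_matching_def using match by blast
qed

definition arc_matching :: "nat \<Rightarrow> nat \<Rightarrow> nat \<Rightarrow> nat" where
  "arc_matching p q j =
     (if j = p then q else if j = q then p else if (p < j \<and> j < q) = even j then j + 1 else j - 1)"

lemma arc_matching_in:
  assumes "odd p" "even q" "p < q" "q \<le> 2 * n" "j \<in> {1..2*n}"
  shows "arc_matching p q j \<in> {1..2*n}"
  using assms unfolding arc_matching_def by (auto; presburger)

lemma arc_matching_involutive:
  assumes "odd p" "even q" "p < q" "1 \<le> j"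
  shows "arc_matching p q (arc_matching p q j) = j"
  using assms unfolding arc_matching_def by (auto; presburger)

lemma arc_matching_adjacent:
  "1 \<le> j \<Longrightarrow> j \<noteq> p \<Longrightarrow> j \<noteq> q \<Longrightarrow> arc_matching p q j = j + 1 \<or> arc_matching p q j + 1 = j"
  unfolding arc_matching_def by auto

lemma arc_matching_match:
  assumes "odd p" "even q" "p < q" "q \<le> 2 * n" "j \<in> {1..2*n}"
  shows "arc_matching p q j \<in> {1..2*n} \<and> arc_matching p q j \<noteq> j \<and>
    arc_matching p q (arc_matching p q j) = j"
proof -
  have "arc_matching p q j \<noteq> j"
    using arc_matching_adjacent[of j p q] assms by (auto simp: arc_matching_def)
  then show ?thesis
    using arc_matching_in[OF assms] arc_matching_involutive[OF assms(1-3)] assms(5) by simp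
qed

lemma noncrossing_matching_arc_matching:
  assumes "odd p" "even q" "p < q" "q \<le> 2 * n"
  shows "noncrossing_matching n (arc_matching p q)"
proof (rule noncrossing_matchingI)
  show "arc_matching p q p = q" "arc_matching p q q = p"
    by (simp_all add: arc_matching_def)
  show "arc_matching p q j = succ_cyc n j \<or> j = succ_cyc n (arc_matching p q j)"
    if "j \<in> {1..2*n}" "j \<noteq> p" "j \<noteq> q" for j
    using arc_matching_adjacent[OF _ that(2,3)] arc_matching_in[OF assms that(1)] assms that
    by (auto simp: succ_cyc_def)
qed (use arc_matching_match[OF assms] in auto)

text \<open>Rotating by one step turns an odd point below an even one into an even point below an
  odd one.\<close>

lemma noncrossing_matching_arc_matching_rotated:
  assumes "odd p" "even q" "q < p" "p < 2 * n" "1 \<le> q"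
  defines "m \<equiv> \<lambda>j. pred_cyc n (arc_matching (q + 1) (p + 1) (succ_cyc n j))"
  shows "noncrossing_matching n m" "m p = q"
proof -
  define M where "M = arc_matching (q + 1) (p + 1)"
  have qp: "odd (q + 1)" "even (p + 1)" "q + 1 < p + 1" "p + 1 \<le> 2 * n"
    using assms by auto
  have M: "M j \<in> {1..2*n} \<and> M j \<noteq> j \<and> M (M j) = j" if "j \<in> {1..2*n}" for j
    using arc_matching_match[OF qp that] unfolding M_def .
  show pq: "m p = q"
    using assms unfolding m_def by (auto simp: succ_cyc_def pred_cyc_def arc_matching_def)
  show "noncrossing_matching n m"
  proof (rule noncrossing_matchingI[where p = p and q = q])
    show "m j \<in> {1..2*n} \<and> m j \<noteq> j \<and> m (m j) = j" if j: "j \<in> {1..2*n}" for j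
      using M[OF succ_cyc_in[OF j]] j succ_cyc_pred_cyc pred_cyc_succ_cyc pred_cyc_in succ_cyc_in
      unfolding m_def M_def by metis
    show "m p = q"
      by (rule pq)
    show "m q = p"
      using assms unfolding m_def by (auto simp: succ_cyc_def pred_cyc_def arc_matching_def)
    show "m j = succ_cyc n j \<or> j = succ_cyc n (m j)"
      if j: "j \<in> {1..2*n}" "j \<noteq> p" "j \<noteq> q" for j
    proof -
      have "1 \<le> succ_cyc n j" "succ_cyc n j \<noteq> q + 1" "succ_cyc n j \<noteq> p + 1"
        using j assms by (auto simp: succ_cyc_def)
      then have "M (succ_cyc n j) = succ_cyc n j + 1 \<or> M (succ_cyc n j) + 1 = succ_cyc n j"
        unfolding M_def by (rule arc_matching_adjacent)
      then show ?thesis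
        using M[OF succ_cyc_in[OF j(1)]] j(1) unfolding m_def M_def
        by (auto simp: succ_cyc_def pred_cyc_def split: if_splits)
    qed
  qed
qed

lemma noncrossing_matching_exists:
  assumes "odd p" "even q" "p \<in> {1..2*n}" "q \<in> {1..2*n}"
  obtains m where "noncrossing_matching n m" "m p = q"
proof (cases "p < q")
  case True
  have "noncrossing_matching n (arc_matching p q)"
    using noncrossing_matching_arc_matching[OF assms(1,2) True] assms(4) by simp
  then show thesis
    by (rule that) (simp add: arc_matching_def)
next
  case False
  have "p \<noteq> q" "p \<noteq> 2 * n"
    using assms by auto
  then have "q < p" "p < 2 * n" "1 \<le> q"
    using False assms(3,4) by auto
  then show thesis
    using that noncrossing_matching_arc_matching_rotated[OF assms(1,2)] by blast
qed

section \<open>The state maps of a tangle diagram\<close>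

lemmas Inr_image_mem_iff [simp] = inj_image_mem_iff[OF inj_Inr]

lemma tdarts_Inl [simp]: "Inl d \<in> tdarts n C \<longleftrightarrow> d \<in> C"
  and tdarts_Inr [simp]: "Inr j \<in> tdarts n C \<longleftrightarrow> j \<in> {1..2*n}"
  unfolding tdarts_def by auto

lemma cap_rot_Inl [simp]: "cap_rot n sg (Inl d) = Inl (sg d)"
  and cap_rot_Inr [simp]: "cap_rot n sg (Inr j) = Inr (succ_cyc n j)"
  by (simp_all add: cap_rot_def succ_cyc_def)

definition state_strands :: "nat \<Rightarrow> 'd set \<Rightarrow> ('d + nat \<Rightarrow> 'd + nat) \<Rightarrow> ('d \<Rightarrow> 'd)
    \<Rightarrow> (('d + nat) \<times> ('d + nat)) set" where
  "state_strands n C al sm =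
     {(x, y). x \<in> tdarts n C \<and> (y = al x \<or> (\<exists>d. x = Inl d \<and> y = Inl (sm d)))}"

text \<open>A state of the tangle: at every crossing the dart d is joined to its clockwise
  neighbour if d \<in> W and to its counterclockwise neighbour otherwise.  W = Ov gives the
  all-A state and W = C - Ov the all-A^-1 state.\<close>

locale tangle_state =
  fixes n :: nat and C :: "'d set" and sg :: "'d \<Rightarrow> 'd" and Ov :: "'d set"
    and al :: "'d + nat \<Rightarrow> 'd + nat" and W :: "'d set"
  assumes tangle: "tangle_diagram n C sg Ov al"
    and W_sub: "W \<subseteq> C"
    and W_alternates: "\<And>d. d \<in> C \<Longrightarrow> d \<in> W \<longleftrightarrow> sg d \<notin> W"
    and n_pos: "1 \<le> n"
begin

abbreviation "X \<equiv> tdarts n C"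
abbreviation "S \<equiv> Inr ` {1..2*n} :: ('d + nat) set"

lemma finite_C: "finite C"
  and sg_bij: "bij_betw sg C C"
  and crossing: "d \<in> C \<Longrightarrow> (sg ^^ 4) d = d \<and> sg (sg d) \<noteq> d"
  and al_involution: "involution_on al X"
  and planar: "planar_map X al (cap_rot n sg)"
  using tangle unfolding tangle_diagram_def edge_involution_def involution_on_def by blast+

lemma finite_X: "finite X"
  unfolding tdarts_def using finite_C by simp

lemma al_in: "x \<in> X \<Longrightarrow> al x \<in> X"
  and al_al: "x \<in> X \<Longrightarrow> al (al x) = x"
  using al_involution unfolding involution_on_def by blast+

lemma sg_in: "d \<in> C \<Longrightarrow> sg d \<in> C"
  using bij_betw_apply[OF sg_bij] .

lemma sg_sg_sg_sg: "d \<in> C \<Longrightarrow> sg (sg (sg (sg d))) = d"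
  using crossing[of d] by (simp add: numeral_eq_Suc)

definition "sg_inv = inv_into C sg"

lemma sg_inv_in: "d \<in> C \<Longrightarrow> sg_inv d \<in> C"
  and sg_sg_inv: "d \<in> C \<Longrightarrow> sg (sg_inv d) = d"
  and sg_inv_sg: "d \<in> C \<Longrightarrow> sg_inv (sg d) = d"
  unfolding sg_inv_def using sg_bij
  by (auto simp: bij_betw_def inv_into_into f_inv_into_f inv_into_f_f)

definition "smooth d = (if d \<in> W then sg_inv d else sg d)"

lemma smooth_in: "d \<in> C \<Longrightarrow> smooth d \<in> C"
  unfolding smooth_def using sg_inv_in sg_in by auto

lemma smooth_smooth: "d \<in> C \<Longrightarrow> smooth (smooth d) = d"
  unfolding smooth_def
  using W_alternates[OF sg_inv_in] W_alternates sg_sg_inv sg_inv_sg by auto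

text \<open>The state map keeps the edges and the cap vertex (the outside of the disk, collapsed
  to a point) and splits every crossing into two 2-valent vertices.\<close>

definition "state_rot x = (case x of Inl d \<Rightarrow> Inl (smooth d) | Inr j \<Rightarrow> Inr (succ_cyc n j))"

definition "state_face x = state_rot (al x)"

lemma state_rot_Inl [simp]: "state_rot (Inl d) = Inl (smooth d)"
  and state_rot_Inr [simp]: "state_rot (Inr j) = Inr (succ_cyc n j)"
  by (simp_all add: state_rot_def)

lemma state_rot_ends: "x \<in> S \<Longrightarrow> state_rot x \<in> S"
  using succ_cyc_in by auto

lemma state_rot_crossings: "involution_on state_rot (X - S)"
  unfolding involution_on_def tdarts_def using smooth_in smooth_smooth by auto

lemma state_rot_bij: "bij_betw state_rot X X"
  by (rule bij_betw_byWitness[where f' = "case_sum (\<lambda>d. Inl (smooth d)) (\<lambda>j. Inr (pred_cyc n j))"])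
    (auto simp: tdarts_def smooth_in smooth_smooth succ_cyc_def pred_cyc_def split: if_splits)

lemma state_face_bij: "bij_betw state_face X X"
  using bij_betw_trans[OF involution_on_bij[OF al_involution] state_rot_bij]
  unfolding state_face_def comp_def .

lemma state_face_in: "x \<in> X \<Longrightarrow> state_face x \<in> X"
  using bij_betw_apply[OF state_face_bij] .

subsection \<open>Euler's formula for the state map\<close>

definition "smoothing_swap x =
  (case x of Inl d \<Rightarrow> if d \<in> W then Inl (sg (sg d)) else Inl d | Inr j \<Rightarrow> Inr j)"

lemma W_sg_sg: "d \<in> C \<Longrightarrow> sg (sg d) \<in> W \<longleftrightarrow> d \<in> W"
  using W_alternates W_alternates[OF sg_in] by blast

lemma smoothing_swap_involution: "involution_on smoothing_swap X"
  unfolding involution_on_def smoothing_swap_def tdarts_def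
  using sg_in sg_sg_sg_sg W_sg_sg by auto

lemma moved_smoothing_swap: "moved smoothing_swap X = Inl ` W"
  unfolding moved_def smoothing_swap_def tdarts_def using W_sub crossing by (auto split: if_splits)

lemma state_rot_smoothing_swap: "x \<in> X \<Longrightarrow> state_rot (smoothing_swap x) = cap_rot n sg x"
  unfolding smoothing_swap_def tdarts_def using W_sg_sg sg_in sg_inv_sg by (auto simp: smooth_def)

text \<open>Since cap_rot = state_rot \<circ> smoothing_swap, the faces of the tangle map are the
  orbits of state_face \<circ> face_swap, where face_swap moves |W| darts.\<close>

definition "face_swap x = al (smoothing_swap (al x))"

lemma face_swap_involution: "involution_on face_swap X"
  using smoothing_swap_involution al_involution
  unfolding involution_on_def face_swap_def by simp

lemma card_moved_face_swap: "card (moved face_swap X) = card W"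
proof -
  have ss: "smoothing_swap y \<in> X" if "y \<in> X" for y
    using smoothing_swap_involution that unfolding involution_on_def by blast
  have "moved face_swap X = al ` moved smoothing_swap X"
  proof (intro equalityI subsetI)
    fix x assume "x \<in> moved face_swap X"
    then have "x \<in> X" "smoothing_swap (al x) \<noteq> al x"
      unfolding moved_def face_swap_def using al_al by auto
    then have "al x \<in> moved smoothing_swap X" "x = al (al x)"
      unfolding moved_def using al_in al_al by simp_all
    then show "x \<in> al ` moved smoothing_swap X"
      by (rule rev_image_eqI)
  next
    fix x assume "x \<in> al ` moved smoothing_swap X"
    then obtain y where y: "y \<in> X" "smoothing_swap y \<noteq> y" "x = al y"
      unfolding moved_def by blast
    then have "al (smoothing_swap y) \<noteq> al y"
      using al_al ss by metis
    then show "x \<in> moved face_swap X"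
      using y al_in al_al unfolding moved_def face_swap_def by simp
  qed
  moreover have "inj_on al X"
    by (rule inj_onI) (metis al_al)
  then have "inj_on al (moved smoothing_swap X)"
    by (rule inj_on_subset) (auto simp: moved_def)
  ultimately show ?thesis
    by (simp add: card_image moved_smoothing_swap)
qed

lemma orbit_count_faces:
  "orbit_count (state_face \<circ> face_swap) X = orbit_count (cap_rot n sg \<circ> al) X"
proof (rule orbit_count_cong)
  fix x assume x: "x \<in> X"
  show "(state_face \<circ> face_swap) x \<in> X"
    using x face_swap_involution state_face_in unfolding involution_on_def by simp
  show "(state_face \<circ> face_swap) x = (cap_rot n sg \<circ> al) x"
    using x al_in al_al smoothing_swap_involution state_rot_smoothing_swap
    unfolding state_face_def face_swap_def involution_on_def by simp
qed

lemma card_C: "card C = 2 * card W"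
proof -
  have "bij_betw sg W (C - W)"
  proof (rule bij_betw_byWitness[where f' = sg_inv])
    show "\<forall>d\<in>W. sg_inv (sg d) = d" "\<forall>d\<in>C - W. sg (sg_inv d) = d"
      using W_sub sg_inv_sg sg_sg_inv by auto
    show "sg ` W \<subseteq> C - W" "sg_inv ` (C - W) \<subseteq> W"
      using W_sub W_alternates sg_in W_alternates[OF sg_inv_in] sg_sg_inv by auto
  qed
  then have "card (C - W) = card W"
    by (simp add: bij_betw_same_card)
  then show ?thesis
    using card_Diff_subset[OF finite_subset[OF W_sub finite_C] W_sub] card_mono[OF finite_C W_sub]
    by simp
qed

lemma card_X: "card X = card C + 2 * n"
proof -
  have "card X = card (Inl ` C :: ('d + nat) set) + card S"
    unfolding tdarts_def using finite_C by (intro card_Un_disjoint) auto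
  then show ?thesis
    by (simp add: card_image)
qed

definition "state_conn = map_rel X al state_rot \<union> (map_rel X al state_rot)\<inverse>"

lemma sym_state_conn: "sym state_conn"
  unfolding state_conn_def by (rule sym_Un_converse)

lemma state_conn_al: "x \<in> X \<Longrightarrow> (x, al x) \<in> state_conn"
  and state_conn_rot: "x \<in> X \<Longrightarrow> (x, state_rot x) \<in> state_conn"
  unfolding state_conn_def map_rel_def by auto

lemma state_conn_face: "x \<in> X \<Longrightarrow> (x, state_face x) \<in> state_conn\<^sup>*"
  using state_conn_al state_conn_rot[OF al_in] unfolding state_face_def
  by (meson r_into_rtrancl rtrancl_into_rtrancl)

lemma class_count_state_conn_face_swap:
  "class_count (state_conn \<union> involution_pairs face_swap X) X
    \<le> class_count (map_rel X al (cap_rot n sg)) X"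
proof (rule class_count_antimono[OF finite_X], rule subsetI)
  let ?Q = "state_conn \<union> involution_pairs face_swap X"
  have swap: "(x, face_swap x) \<in> ?Q\<^sup>*" if "x \<in> X" for x
    using that unfolding involution_pairs_def by (cases "face_swap x = x") auto
  fix e assume "e \<in> map_rel X al (cap_rot n sg)"
  then obtain x y where e: "e = (x, y)" "x \<in> X" "y = al x \<or> y = cap_rot n sg x"
    unfolding map_rel_def by auto
  have "(x, cap_rot n sg x) \<in> ?Q\<^sup>*"
  proof -
    have "(x, al x) \<in> ?Q\<^sup>*" "(al x, face_swap (al x)) \<in> ?Q\<^sup>*"
      using state_conn_al e(2) swap al_in by blast+
    moreover have "(face_swap (al x), state_face (face_swap (al x))) \<in> ?Q\<^sup>*"
      using state_conn_face face_swap_involution al_in e(2) rtrancl_mono[of state_conn ?Q]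
      unfolding involution_on_def by blast
    moreover have "state_face (face_swap (al x)) = cap_rot n sg x"
      using orbit_count_faces e(2) al_in al_al smoothing_swap_involution state_rot_smoothing_swap
      unfolding state_face_def face_swap_def involution_on_def by simp
    ultimately show ?thesis
      by (metis rtrancl_trans)
  qed
  then show "e \<in> ?Q\<^sup>*"
    using e state_conn_al by auto
qed

lemma dorbit_cap_rot_end:
  assumes "x \<in> S"
  shows "dorbit (cap_rot n sg) x = S"
proof -
  obtain j where "x = Inr j" "j \<in> {1..2*n}"
    using assms by blast
  then show ?thesis
    using dorbit_conj[of "{1..2*n}" "succ_cyc n" "cap_rot n sg" Inr j] dorbit_succ_cyc succ_cyc_in
    by simp
qed

lemma card_dorbit_cap_rot_crossing:
  assumes "d \<in> C"
  shows "4 \<le> card (dorbit (cap_rot n sg) (Inl d))" "dorbit (cap_rot n sg) (Inl d) \<subseteq> Inl ` C"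
proof -
  let ?O = "dorbit (cap_rot n sg) (Inl d)"
  show sub: "?O \<subseteq> Inl ` C"
    using assms sg_in by (intro dorbit_closed) auto
  have "(cap_rot n sg ^^ k) (Inl d) = Inl ((sg ^^ k) d)" for k
    by (induction k) simp_all
  then have "Inl ((sg ^^ k) d) \<in> ?O" for k
    using dorbit_funpow[of k "cap_rot n sg" "Inl d"] by simp
  then have "{Inl d, Inl (sg d), Inl (sg (sg d)), Inl (sg (sg (sg d)))} \<subseteq> ?O"
    using dorbit_self[of "Inl d"] numeral_2_eq_2 numeral_3_eq_3
    by (metis One_nat_def empty_subsetI funpow.simps(2) funpow_0 insert_subset o_apply)
  moreover have "sg d \<noteq> d" "sg (sg d) \<noteq> d" "sg (sg (sg d)) \<noteq> d" "sg (sg d) \<noteq> sg d"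
    "sg (sg (sg d)) \<noteq> sg d" "sg (sg (sg d)) \<noteq> sg (sg d)"
    using crossing[OF assms] crossing[OF sg_in[OF assms]] sg_sg_sg_sg[OF assms] by metis+
  then have "card {Inl d, Inl (sg d), Inl (sg (sg d)), Inl (sg (sg (sg d)))} = (4 :: nat)"
    by simp
  moreover have "finite ?O"
    using finite_subset[OF sub] finite_C by simp
  ultimately show "4 \<le> card ?O"
    by (metis card_mono)
qed

lemma vertex_count_bound: "4 * orbit_count (cap_rot n sg) X \<le> card C + 4"
proof -
  let ?V = "dorbit (cap_rot n sg) ` Inl ` C"
  have X: "X = Inl ` C \<union> S"
    by (simp add: tdarts_def)
  have cap_bij: "bij_betw (cap_rot n sg) X X"
    using planar unfolding planar_map_def by blast
  have "dorbit (cap_rot n sg) ` S \<subseteq> {S}"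
    using dorbit_cap_rot_end by auto
  then have "card (dorbit (cap_rot n sg) ` S) \<le> 1"
    using card_mono[of "{S}"] by fastforce
  moreover have "orbit_count (cap_rot n sg) X \<le> card ?V + card (dorbit (cap_rot n sg) ` S)"
    unfolding orbit_count_def X image_Un by (rule card_Un_le)
  moreover have "4 * card ?V \<le> card (Inl ` C :: ('d + nat) set)"
  proof (rule card_disjoint_family_le)
    show "pairwise disjnt ?V"
    proof (rule pairwiseI)
      fix P Q assume "P \<in> ?V" "Q \<in> ?V" "P \<noteq> Q"
      then obtain d e where "Inl d \<in> X" "P = dorbit (cap_rot n sg) (Inl d)"
        "Inl e \<in> X" "Q = dorbit (cap_rot n sg) (Inl e)"
        by auto
      then show "disjnt P Q"
        using dorbit_eq[OF finite_X cap_bij] \<open>P \<noteq> Q\<close> unfolding disjnt_def by blast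
    qed
  qed (use finite_C card_dorbit_cap_rot_crossing in auto)
  ultimately show ?thesis
    using finite_C by (simp add: card_image)
qed

lemma euler_state_map: "n + 2 * class_count state_conn X \<le> orbit_count state_face X + 1"
proof -
  let ?V = "orbit_count (cap_rot n sg) X" and ?F = "orbit_count (cap_rot n sg \<circ> al) X"
  have euler: "int ?V - int (card X div 2) + int ?F
      = 2 * int (class_count (map_rel X al (cap_rot n sg)) X)"
    using planar unfolding planar_map_def orbit_count_def class_count_def by simp
  have "2 * ?F + 4 * class_count state_conn X
      \<le> 2 * orbit_count state_face X + card W + 4 * class_count (state_conn \<union> involution_pairs face_swap X) X"
    using orbit_count_comp_involution_classes[OF finite_X state_face_bij sym_state_conn
        state_conn_face face_swap_involution] orbit_count_faces card_moved_face_swap by simp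
  then show ?thesis
    using euler card_X card_C vertex_count_bound class_count_state_conn_face_swap by linarith
qed

lemma state_face_eq: "x \<in> X \<Longrightarrow> y \<in> dorbit state_face x \<Longrightarrow> dorbit state_face y = dorbit state_face x"
  using dorbit_eq[OF finite_X state_face_bij] .

lemma dorbit_state_face_sub: "x \<in> X \<Longrightarrow> dorbit state_face x \<subseteq> X"
  using dorbit_closed[of X state_face x] state_face_in by blast

lemma al_state_face_in_dorbit:
  assumes "w \<in> X" "al w \<notin> S"
  shows "al (state_face w) \<in> dorbit state_face (al w)"
proof -
  have aw: "al w \<in> X - S"
    using assms al_in by blast
  then have "state_face (al (state_face w)) = al w"
    using state_rot_crossings al_al state_face_in[OF assms(1)]
    unfolding state_face_def involution_on_def by simp
  then have "al w \<in> dorbit state_face (al (state_face w))"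
    using dorbit_step[OF dorbit_self] by metis
  then show ?thesis
    using dorbit_sym[OF finite_X state_face_bij] al_in state_face_in assms(1) by blast
qed

text \<open>A face of the state map that avoids the ends bounds a circle of the state, whose
  other side is the face through the opposite darts.\<close>

lemma al_dorbit_state_face_avoiding_ends:
  assumes y: "y \<in> X" and avoid: "dorbit state_face y \<inter> S = {}"
  shows "z \<in> dorbit state_face y \<Longrightarrow> al z \<in> dorbit state_face (al y)"
    and "w \<in> dorbit state_face (al y) \<Longrightarrow> w \<notin> S \<and> al w \<in> dorbit state_face y"
proof -
  have al_out: "al z \<notin> S" if "z \<in> dorbit state_face y" for z
  proof
    assume "al z \<in> S"
    then have "state_face z \<in> S"
      unfolding state_face_def by (rule state_rot_ends)
    then show False
      using avoid dorbit_step[OF that] by blast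
  qed
  show "al z \<in> dorbit state_face (al y)" if "z \<in> dorbit state_face y" for z
    using that
  proof (induction rule: dorbit_induct)
    case (step z)
    have "z \<in> X"
      using dorbit_state_face_sub[OF y] step(1) by blast
    then show ?case
      using al_state_face_in_dorbit al_out[OF step(1)] state_face_eq[OF al_in[OF y] step(2)] by blast
  qed (rule dorbit_self)
  show "w \<notin> S \<and> al w \<in> dorbit state_face y" if "w \<in> dorbit state_face (al y)"
    using that
  proof (induction rule: dorbit_induct)
    case base
    show ?case
      using al_out[OF dorbit_self] al_al[OF y] dorbit_self[of y] by simp
  next
    case (step w)
    have w: "w \<in> X" "al w \<in> X - S"
      using dorbit_state_face_sub[OF al_in[OF y]] step avoid al_in by blast+
    then have "state_face w \<in> X - S"
      using state_rot_crossings unfolding state_face_def involution_on_def by blast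
    moreover have "al (state_face w) \<in> dorbit state_face y"
      using al_state_face_in_dorbit[OF w(1)] w(2) state_face_eq[OF y] step(2) by blast
    ultimately show ?case
      by blast
  qed
qed

lemma state_conn_off_ends:
  assumes "(u, v) \<in> state_conn" "u \<notin> S"
  shows "v = al u \<or> v = state_rot u"
proof -
  from assms(1) have "(u, v) \<in> map_rel X al state_rot \<or> (v, u) \<in> map_rel X al state_rot"
    unfolding state_conn_def by blast
  then consider "v = al u \<or> v = state_rot u" | "v \<in> X" "u = al v" | "v \<in> X" "u = state_rot v"
    unfolding map_rel_def by blast
  then show ?thesis
  proof cases
    case 2
    then show ?thesis
      using al_al by simp
  next
    case 3
    then have "v \<in> X - S"
      using assms(2) state_rot_ends by blast
    then show ?thesis
      using 3 state_rot_crossings unfolding involution_on_def by simp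
  qed simp
qed

lemma state_conn_class_avoiding_ends:
  assumes y: "y \<in> X" and avoid: "dorbit state_face y \<inter> S = {}"
  shows "state_conn\<^sup>* `` {y} \<subseteq> dorbit state_face y \<union> dorbit state_face (al y)"
proof -
  let ?U = "dorbit state_face y \<union> dorbit state_face (al y)"
  note al_U = al_dorbit_state_face_avoiding_ends[OF assms]
  have U_X: "?U \<subseteq> X" and U_S: "?U \<inter> S = {}"
    using dorbit_state_face_sub[OF y] dorbit_state_face_sub[OF al_in[OF y]] avoid al_U(2) by blast+
  have al_in_U: "al u \<in> ?U" if "u \<in> ?U" for u
    using that al_U by blast
  have rot_in_U: "state_rot u \<in> ?U" if "u \<in> ?U" for u
  proof -
    have "state_rot u = state_face (al u)"
      using U_X that al_al unfolding state_face_def by auto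
    then show ?thesis
      using al_in_U[OF that] dorbit_step[of "al u" state_face y] dorbit_step[of "al u" state_face "al y"]
      by auto
  qed
  have "z \<in> ?U" if "(y, z) \<in> state_conn\<^sup>*" for z
    using that
  proof (induction rule: rtrancl_induct)
    case base
    show ?case
      using dorbit_self[of y] by blast
  next
    case (step u v)
    then have "v = al u \<or> v = state_rot u"
      using state_conn_off_ends U_S by blast
    then show ?case
      using al_in_U[OF step(3)] rot_in_U[OF step(3)] by blast
  qed
  then show ?thesis
    by blast
qed

lemma card_faces_avoiding_ends:
  "card {Q \<in> dorbit state_face ` X. Q \<inter> S = {}}
    \<le> 2 * card {K \<in> (\<lambda>x. state_conn\<^sup>* `` {x}) ` X. K \<inter> S = {}}"
proof (rule card_le_mult_fibres[where f = "\<lambda>Q. state_conn\<^sup>* `` Q"])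
  let ?K = "\<lambda>x. state_conn\<^sup>* `` {x}"
  have class_eq: "state_conn\<^sup>* `` dorbit state_face y = ?K y" if "y \<in> X" for y
    using dorbit_subset_class[of X state_face state_conn y] state_face_in state_conn_face that
      dorbit_self[of y] by (auto intro: rtrancl_trans)
  show "(\<lambda>Q. state_conn\<^sup>* `` Q) ` {Q \<in> dorbit state_face ` X. Q \<inter> S = {}}
      \<subseteq> {K \<in> ?K ` X. K \<inter> S = {}}"
    using class_eq state_conn_class_avoiding_ends al_dorbit_state_face_avoiding_ends(2) by fastforce
  fix K assume "K \<in> {K \<in> ?K ` X. K \<inter> S = {}}"
  then obtain y where y: "y \<in> X" "K = ?K y" "K \<inter> S = {}"
    by blast
  have avoid: "dorbit state_face y \<inter> S = {}"
    using y class_eq dorbit_self by blast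
  have fibre: "{Q \<in> {Q \<in> dorbit state_face ` X. Q \<inter> S = {}}. state_conn\<^sup>* `` Q = K}
      \<subseteq> {dorbit state_face y, dorbit state_face (al y)}"
  proof
    fix Q assume "Q \<in> {Q \<in> {Q \<in> dorbit state_face ` X. Q \<inter> S = {}}. state_conn\<^sup>* `` Q = K}"
    then obtain x where x: "x \<in> X" "Q = dorbit state_face x" "?K x = K"
      using class_eq by auto
    then have "x \<in> dorbit state_face y \<union> dorbit state_face (al y)"
      using y(2) state_conn_class_avoiding_ends[OF y(1) avoid] by blast
    then show "Q \<in> {dorbit state_face y, dorbit state_face (al y)}"
      using x(2) state_face_eq[OF y(1)] state_face_eq[OF al_in[OF y(1)]] by blast
  qed
  show "card {Q \<in> {Q \<in> dorbit state_face ` X. Q \<inter> S = {}}. state_conn\<^sup>* `` Q = K} \<le> 2"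
    using card_mono[OF _ fibre] by (simp add: card_insert_if split: if_splits)
qed (use finite_X in simp)

lemma orbit_count_first_return_ends: "n + 1 \<le> orbit_count (first_return state_face S) S"
proof -
  let ?O = "dorbit state_face ` X" and ?K = "(\<lambda>x. state_conn\<^sup>* `` {x}) ` X"
  have S: "S \<subseteq> X"
    by (auto simp: tdarts_def)
  have "orbit_count state_face X = card {Q \<in> ?O. Q \<inter> S \<noteq> {}} + card {Q \<in> ?O. Q \<inter> S = {}}"
    unfolding orbit_count_def using finite_X by (subst card_Un_disjoint[symmetric]) (auto intro: arg_cong[of _ _ card])
  moreover have "class_count state_conn X = card {K \<in> ?K. K \<inter> S \<noteq> {}} + card {K \<in> ?K. K \<inter> S = {}}"
    unfolding class_count_def using finite_X by (subst card_Un_disjoint[symmetric]) (auto intro: arg_cong[of _ _ card])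
  moreover have "1 \<le> card {K \<in> ?K. K \<inter> S \<noteq> {}}"
  proof -
    have "Inr 1 \<in> X"
      using n_pos by simp
    then have "state_conn\<^sup>* `` {Inr 1} \<in> {K \<in> ?K. K \<inter> S \<noteq> {}}"
      using n_pos by auto
    then show ?thesis
      using finite_X by (simp add: Suc_le_eq card_gt_0_iff) blast
  qed
  ultimately show ?thesis
    using euler_state_map card_faces_avoiding_ends orbit_count_first_return[OF finite_X state_face_bij S]
    by linarith
qed

text \<open>The first return of the face walk to the ends goes from the end j to the end after
  the other end of the arc of the state that starts at j.\<close>

definition "arc_end j = pred_cyc n (projr (first_return state_face S (Inr j)))"

lemma first_return_state_face_end:
  assumes "j \<in> {1..2*n}"
  shows "arc_end j \<in> {1..2*n}" "first_return state_face S (Inr j) = Inr (succ_cyc n (arc_end j))"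
proof -
  have "first_return state_face S (Inr j) \<in> S"
    using first_return_in[OF finite_X state_face_bij _ ] assms by (auto simp: tdarts_def)
  then obtain k where "k \<in> {1..2*n}" "first_return state_face S (Inr j) = Inr k"
    by blast
  then show "arc_end j \<in> {1..2*n}" "first_return state_face S (Inr j) = Inr (succ_cyc n (arc_end j))"
    unfolding arc_end_def using pred_cyc_in succ_cyc_pred_cyc by simp_all
qed

lemma arc_end_involution: "involution_on arc_end {1..2*n}"
  unfolding involution_on_def
proof (intro ballI conjI)
  fix j assume j: "j \<in> {1..2*n}"
  note e = first_return_state_face_end[OF j]
  show "arc_end j \<in> {1..2*n}"
    by (rule e(1))
  have "state_rot \<circ> al = state_face"
    by (simp add: fun_eq_iff state_face_def)
  then have "first_return state_face S (Inr (arc_end j)) = state_rot (Inr j)"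
    using first_return_reverse[OF finite_X al_involution state_rot_bij _ state_rot_ends
        state_rot_crossings, of "Inr j" "Inr (arc_end j)"] e j
    by (auto simp: tdarts_def)
  then have "succ_cyc n (arc_end (arc_end j)) = succ_cyc n j"
    using first_return_state_face_end[OF e(1)] by simp
  then show "arc_end (arc_end j) = j"
    using pred_cyc_succ_cyc j first_return_state_face_end(1)[OF e(1)] by metis
qed

lemma arc_end_many_cycles: "n + 1 \<le> orbit_count (succ_cyc n \<circ> arc_end) {1..2*n}"
proof -
  have "orbit_count (first_return state_face S) S = orbit_count (succ_cyc n \<circ> arc_end) {1..2*n}"
    by (rule orbit_count_image)
      (use first_return_state_face_end succ_cyc_in in auto)
  then show ?thesis
    using orbit_count_first_return_ends by simp
qed

lemma arc_end_parity: "j \<in> {1..2*n} \<Longrightarrow> odd j \<longleftrightarrow> even (arc_end j)"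
  by (rule odd_even_if_many_cycles[OF arc_end_involution arc_end_many_cycles])

lemma state_strands_face_step:
  assumes "x \<in> X" "al x \<notin> S"
  shows "(x, state_face x) \<in> (state_strands n C al smooth)\<^sup>*"
proof -
  obtain d where d: "al x = Inl d"
    using assms al_in[OF assms(1)] by (cases "al x") auto
  then have "(x, al x) \<in> state_strands n C al smooth" "(al x, state_face x) \<in> state_strands n C al smooth"
    using assms(1) al_in[OF assms(1)] unfolding state_strands_def state_face_def by simp_all
  then show ?thesis
    by (rule rtrancl_into_rtrancl[OF r_into_rtrancl])
qed

lemma state_strands_arc_end:
  assumes j: "j \<in> {1..2*n}"
  shows "(Inr j, Inr (arc_end j)) \<in> (state_strands n C al smooth)\<^sup>*"
proof -
  let ?R = "state_strands n C al smooth" and ?w = "\<lambda>i. (state_face ^^ i) (Inr j)"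
  have S: "S \<subseteq> X" "Inr j \<in> S"
    using j by (auto simp: tdarts_def)
  obtain T where T: "return_time state_face S (Inr j) = Suc T"
    using return_time_pos[OF finite_X state_face_bij S] gr0_implies_Suc by blast
  have walk_X: "?w i \<in> X" for i
    using bij_betw_apply[OF bij_betw_funpow[OF state_face_bij, of i]] S by auto
  have out: "al (?w i) \<notin> S" if "i < T" for i
    using funpow_before_return[of "Suc i" state_face S "Inr j"] T that state_rot_ends
    by (auto simp: state_face_def)
  have "(Inr j, ?w i) \<in> ?R\<^sup>*" if "i \<le> T" for i
    using that
  proof (induction i)
    case (Suc i)
    then have "(Inr j, ?w i) \<in> ?R\<^sup>*" "(?w i, ?w (Suc i)) \<in> ?R\<^sup>*"
      using state_strands_face_step[OF walk_X out] by simp_all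
    then show ?case
      by (rule rtrancl_trans)
  qed simp
  moreover have "al (?w T) = Inr (arc_end j)"
  proof -
    have "state_rot (al (?w T)) = Inr (succ_cyc n (arc_end j))"
      using first_return_state_face_end(2)[OF j] T unfolding first_return_def
      by (simp add: state_face_def)
    then show ?thesis
      using al_in[OF walk_X[of T]] pred_cyc_succ_cyc first_return_state_face_end(1)[OF j]
        state_rot_crossings
      by (cases "al (?w T)") (auto simp: tdarts_def involution_on_def, metis)
  qed
  moreover have "(?w T, al (?w T)) \<in> ?R"
    using walk_X unfolding state_strands_def by simp
  ultimately show ?thesis
    by (metis order_refl rtrancl.rtrancl_into_rtrancl)
qed

lemma state_arc_parity:
  "j \<in> {1..2*n} \<Longrightarrow> \<exists>k\<in>{1..2*n}. (Inr j, Inr k) \<in> (state_strands n C al smooth)\<^sup>* \<and> (odd j \<longleftrightarrow> even k)"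
  using state_strands_arc_end arc_end_parity first_return_state_face_end(1) by blast

end

section \<open>Closures of the tangle and the doubled diagram\<close>

lemma sym_map_rel:
  assumes "involution_on a H" "involution_on s H"
  shows "sym (map_rel H a s)"
  using assms unfolding sym_def map_rel_def involution_on_def by auto

locale tangle =
  fixes n :: nat and C :: "'d set" and sg :: "'d \<Rightarrow> 'd" and Ov :: "'d set"
    and al :: "'d + nat \<Rightarrow> 'd + nat"
  assumes tangle: "tangle_diagram n C sg Ov al" and n_pos: "1 \<le> n"

lemma (in tangle) Ov_sub: "Ov \<subseteq> C"
  and Ov_alternates: "d \<in> C \<Longrightarrow> d \<in> Ov \<longleftrightarrow> sg d \<notin> Ov"
  and sg_in: "d \<in> C \<Longrightarrow> sg d \<in> C"
  using tangle bij_betw_apply[of sg C C d] unfolding tangle_diagram_def by blast+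

sublocale tangle \<subseteq> A: tangle_state n C sg Ov al Ov
  by unfold_locales (use tangle n_pos Ov_sub Ov_alternates in auto)

sublocale tangle \<subseteq> Ainv: tangle_state n C sg Ov al "C - Ov"
  by unfold_locales (use tangle n_pos Ov_alternates sg_in in auto)

context tangle
begin

abbreviation "X \<equiv> tdarts n C"

lemma involution_on_smooth: "involution_on A.smooth C" "involution_on Ainv.smooth C"
  unfolding involution_on_def using A.smooth_in A.smooth_smooth Ainv.smooth_in Ainv.smooth_smooth
  by blast+

context
  fixes sm :: "'d \<Rightarrow> 'd"
  assumes sm: "involution_on sm C"
begin

lemma sym_state_strands: "sym (state_strands n C al sm)"
  using sm A.al_involution unfolding sym_def state_strands_def involution_on_def by auto

lemma state_strands_rtrancl_sym:
  "(u, v) \<in> (state_strands n C al sm)\<^sup>* \<Longrightarrow> (v, u) \<in> (state_strands n C al sm)\<^sup>*"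
  using sym_rtrancl[OF sym_state_strands] unfolding sym_def by blast

lemma state_strands_rtrancl_in:
  "(u, v) \<in> (state_strands n C al sm)\<^sup>* \<Longrightarrow> u \<in> X \<Longrightarrow> v \<in> X"
  by (induction rule: rtrancl_induct)
    (use sm A.al_in in \<open>auto simp: state_strands_def involution_on_def\<close>)

lemma closure_path_inside:
  assumes smc: "\<And>d. d \<in> C \<Longrightarrow> smc (Inl (Inl d)) = Inl (Inl (sm d))"
    and uv: "(u, v) \<in> (state_strands n C al sm)\<^sup>*"
  shows "(Inl u, Inl v) \<in> (map_rel (cl_darts n C) (cl_edge al m) smc)\<^sup>*"
  using uv
proof (induction rule: rtrancl_induct)
  case (step y z)
  then have "(Inl y, Inl z) \<in> map_rel (cl_darts n C) (cl_edge al m) smc"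
    using smc unfolding state_strands_def map_rel_def cl_darts_def cl_edge_def by auto
  then show ?case
    using step(3) by simp
qed simp

lemma closure_path_outside:
  assumes smc: "\<And>j. smc (Inl (Inr j)) = Inr j" "\<And>j. smc (Inr j) = Inl (Inr j)"
    and p: "p \<in> {1..2*n}" "m p \<in> {1..2*n}"
  shows "(Inl (Inr p), Inl (Inr (m p))) \<in> (map_rel (cl_darts n C) (cl_edge al m) smc)\<^sup>*"
proof -
  let ?R = "map_rel (cl_darts n C) (cl_edge al m) smc"
  have "(Inl (Inr p), Inr p) \<in> ?R" "(Inr p, Inr (m p)) \<in> ?R" "(Inr (m p), Inl (Inr (m p))) \<in> ?R"
    using p smc unfolding map_rel_def cl_darts_def cl_edge_def by auto
  then show ?thesis
    by (meson r_into_rtrancl rtrancl_trans)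
qed

lemma reaches_end_of_parity:
  assumes arcs: "\<And>j. j \<in> {1..2*n} \<Longrightarrow>
      \<exists>k\<in>{1..2*n}. (Inr j, Inr k) \<in> (state_strands n C al sm)\<^sup>* \<and> (odd j \<longleftrightarrow> even k)"
    and z: "\<exists>j\<in>{1..2*n}. (z, Inr j) \<in> (state_strands n C al sm)\<^sup>*"
  shows "\<exists>p\<in>{1..2*n}. (odd p \<longleftrightarrow> b) \<and> (z, Inr p) \<in> (state_strands n C al sm)\<^sup>*"
proof -
  let ?R = "state_strands n C al sm"
  obtain j where j: "j \<in> {1..2*n}" "(z, Inr j) \<in> ?R\<^sup>*"
    using z by blast
  obtain k where k: "k \<in> {1..2*n}" "(Inr j, Inr k) \<in> ?R\<^sup>*" "odd j \<longleftrightarrow> even k"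
    using arcs[OF j(1)] by blast
  have "(z, Inr k) \<in> ?R\<^sup>*"
    using j(2) k(2) by (rule rtrancl_trans)
  show ?thesis
  proof (cases "odd j \<longleftrightarrow> b")
    case False
    then have "odd k \<longleftrightarrow> b"
      using k(3) by auto
    then show ?thesis
      using k(1) \<open>(z, Inr k) \<in> ?R\<^sup>*\<close> by blast
  qed (use j in blast)
qed

text \<open>The arcs of a state end at points of both parities, and an odd point can be joined to an
  even one by a noncrossing matching.\<close>

lemma closure_connects:
  assumes arcs: "\<And>j. j \<in> {1..2*n} \<Longrightarrow>
      \<exists>k\<in>{1..2*n}. (Inr j, Inr k) \<in> (state_strands n C al sm)\<^sup>* \<and> (odd j \<longleftrightarrow> even k)"
    and smc: "\<And>d. d \<in> C \<Longrightarrow> smc (Inl (Inl d)) = Inl (Inl (sm d))"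
      "\<And>j. smc (Inl (Inr j)) = Inr j" "\<And>j. smc (Inr j) = Inl (Inr j)"
    and reach: "(x, y) \<in> (state_strands n C al sm)\<^sup>* \<or>
      ((\<exists>j\<in>{1..2*n}. (x, Inr j) \<in> (state_strands n C al sm)\<^sup>*) \<and>
       (\<exists>k\<in>{1..2*n}. (y, Inr k) \<in> (state_strands n C al sm)\<^sup>*))"
  obtains m where "noncrossing_matching n m"
    "(Inl x, Inl y) \<in> (map_rel (cl_darts n C) (cl_edge al m) smc)\<^sup>*"
proof -
  let ?R = "state_strands n C al sm"
  from reach consider "(x, y) \<in> ?R\<^sup>*" | "\<exists>j\<in>{1..2*n}. (x, Inr j) \<in> ?R\<^sup>*" "\<exists>k\<in>{1..2*n}. (y, Inr k) \<in> ?R\<^sup>*"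
    by blast
  then show thesis
  proof cases
    case 1
    obtain m where "noncrossing_matching n m"
      using noncrossing_matching_exists[of 1 2 n] n_pos by auto
    then show thesis
      using that closure_path_inside[OF smc(1) 1] by blast
  next
    case 2
    obtain p where p: "p \<in> {1..2*n}" "odd p" "(x, Inr p) \<in> ?R\<^sup>*"
      using reaches_end_of_parity[OF arcs 2(1), of True] by auto
    obtain q where q: "q \<in> {1..2*n}" "even q" "(y, Inr q) \<in> ?R\<^sup>*"
      using reaches_end_of_parity[OF arcs 2(2), of False] by auto
    obtain m where m: "noncrossing_matching n m" "m p = q"
      using noncrossing_matching_exists[OF p(2) q(2) p(1) q(1)] .
    let ?Q = "map_rel (cl_darts n C) (cl_edge al m) smc"
    have "(Inl x, Inl (Inr p)) \<in> ?Q\<^sup>*" "(Inl (Inr q), Inl y) \<in> ?Q\<^sup>*"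
      using closure_path_inside[OF smc(1) p(3)] closure_path_inside[OF smc(1) state_strands_rtrancl_sym[OF q(3)]]
      by simp_all
    moreover have "(Inl (Inr p), Inl (Inr q)) \<in> ?Q\<^sup>*"
      using closure_path_outside[OF smc(2,3) p(1), of m] m(2) q(1) by simp
    ultimately have "(Inl x, Inl y) \<in> ?Q\<^sup>*"
      by (meson rtrancl_trans)
    with m(1) show thesis
      by (rule that)
  qed
qed

end

abbreviation "LH \<equiv> LT_darts n C"

lemma LT_emb_simps [simp]:
  "LT_emb True (Inl d) = Inl (Inl d)" "LT_emb False (Inl d) = Inl (Inr d)"
  "LT_emb b (Inr j) = Inr (j, b)"
  by (simp_all add: LT_emb_def)

lemma LT_emb_inj: "LT_emb b u = LT_emb b v \<Longrightarrow> u = v"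
  by (cases u; cases v; cases b) (auto simp: LT_emb_def)

lemma LT_edge_emb: "LT_edge al (LT_emb b z) = LT_emb b (al z)"
  by (cases z; cases b) (simp_all add: LT_edge_def LT_emb_def)

lemma LT_emb_in: "z \<in> X \<Longrightarrow> LT_emb b z \<in> LH"
  by (cases z; cases b) (auto simp: LT_emb_def LT_darts_def)

lemma LT_darts_cases:
  assumes "w \<in> LH"
  obtains b z where "z \<in> X" "w = LT_emb b z"
proof -
  from assms consider (over) d where "d \<in> C" "w = Inl (Inl d)"
    | (under) d where "d \<in> C" "w = Inl (Inr d)"
    | (boundary) j b where "j \<in> {1..2*n}" "w = Inr (j, b)"
    unfolding LT_darts_def by auto
  then show thesis
  proof cases
    case over
    then show thesis
      using that[of "Inl d" True] by simp
  next
    case under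
    then show thesis
      using that[of "Inl d" False] by simp
  next
    case boundary
    then show thesis
      using that[of "Inr j" b] by simp
  qed
qed

lemma involution_on_LT_edge: "involution_on (LT_edge al) LH"
  unfolding involution_on_def
  by (metis LT_darts_cases LT_edge_emb LT_emb_in A.al_in A.al_al)

lemma LT_path_one_side:
  assumes sm: "involution_on sm C"
    and smo: "\<And>d. d \<in> C \<Longrightarrow> smo (LT_emb b (Inl d)) = LT_emb b (Inl (sm d))"
    and x: "x \<in> X" and no_end: "\<forall>j. (x, Inr j) \<notin> (state_strands n C al sm)\<^sup>*"
    and path: "(LT_emb b x, w) \<in> (map_rel LH (LT_edge al) smo)\<^sup>*"
  shows "\<exists>z. (x, z) \<in> (state_strands n C al sm)\<^sup>* \<and> w = LT_emb b z"
  using path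
proof (induction rule: rtrancl_induct)
  case (step w w')
  then obtain z where z: "(x, z) \<in> (state_strands n C al sm)\<^sup>*" "w = LT_emb b z"
    by blast
  have "z \<in> X"
    using state_strands_rtrancl_in[OF sm z(1) x] .
  then obtain d where d: "z = Inl d" "d \<in> C"
    using no_end z(1) by (cases z) auto
  from step(2) have "w' = LT_edge al w \<or> w' = smo w"
    unfolding map_rel_def by auto
  then show ?case
  proof
    assume "w' = LT_edge al w"
    moreover have "(z, al z) \<in> state_strands n C al sm"
      using \<open>z \<in> X\<close> unfolding state_strands_def by simp
    ultimately show ?thesis
      using z LT_edge_emb by (metis rtrancl.rtrancl_into_rtrancl)
  next
    assume "w' = smo w"
    moreover have "(z, Inl (sm d)) \<in> state_strands n C al sm"
      using \<open>z \<in> X\<close> d unfolding state_strands_def by simp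
    ultimately show ?thesis
      using z d smo by (metis rtrancl.rtrancl_into_rtrancl)
  qed
qed blast

lemma LT_path_cases:
  assumes sm: "involution_on sm C"
    and smo: "\<And>d. d \<in> C \<Longrightarrow> smo (LT_emb b (Inl d)) = LT_emb b (Inl (sm d))"
    and smo_inv: "involution_on smo LH"
    and x: "x \<in> X" and y: "y \<in> X"
    and path: "(LT_emb b x, LT_emb b y) \<in> (map_rel LH (LT_edge al) smo)\<^sup>*"
  shows "(x, y) \<in> (state_strands n C al sm)\<^sup>* \<or>
    ((\<exists>j\<in>{1..2*n}. (x, Inr j) \<in> (state_strands n C al sm)\<^sup>*) \<and>
     (\<exists>k\<in>{1..2*n}. (y, Inr k) \<in> (state_strands n C al sm)\<^sup>*))"
proof -
  let ?R = "state_strands n C al sm"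
  have end_in: "j \<in> {1..2*n}" if "(u, Inr j) \<in> ?R\<^sup>*" "u \<in> X" for u j
    using state_strands_rtrancl_in[OF sm that] by simp
  have path_back: "(LT_emb b y, LT_emb b x) \<in> (map_rel LH (LT_edge al) smo)\<^sup>*"
    using sym_rtrancl[OF sym_map_rel[OF involution_on_LT_edge smo_inv]] path
    unfolding sym_def by blast
  show ?thesis
  proof (cases "\<exists>j. (x, Inr j) \<in> ?R\<^sup>*")
    case False
    then show ?thesis
      using LT_path_one_side[OF sm smo x _ path] LT_emb_inj by blast
  next
    case True
    show ?thesis
    proof (cases "\<exists>k. (y, Inr k) \<in> ?R\<^sup>*")
      case False
      then have "(y, x) \<in> ?R\<^sup>*"
        using LT_path_one_side[OF sm smo y _ path_back] LT_emb_inj by blast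
      then show ?thesis
        using state_strands_rtrancl_sym[OF sm] by blast
    qed (use True end_in x y in blast)
  qed
qed

lemma LT_grey_segment_separated:
  assumes sm: "involution_on sm C"
    and arcs: "\<And>j. j \<in> {1..2*n} \<Longrightarrow>
      \<exists>k\<in>{1..2*n}. (Inr j, Inr k) \<in> (state_strands n C al sm)\<^sup>* \<and> (odd j \<longleftrightarrow> even k)"
    and smo: "\<And>d. d \<in> C \<Longrightarrow> smo (LT_emb b (Inl d)) = LT_emb b (Inl (sm d))"
      "involution_on smo LH"
    and smc: "\<And>d. d \<in> C \<Longrightarrow> smc (Inl (Inl d)) = Inl (Inl (sm d))"
      "\<And>j. smc (Inl (Inr j)) = Inr j" "\<And>j. smc (Inr j) = Inl (Inr j)"
    and de: "d \<in> C" "e \<in> C"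
    and separated: "\<And>m. noncrossing_matching n m \<Longrightarrow>
      (Inl (Inl d), Inl (Inl e)) \<notin> (map_rel (cl_darts n C) (cl_edge al m) smc)\<^sup>*"
  shows "(LT_emb b (Inl d), LT_emb b (Inl e)) \<notin> (map_rel LH (LT_edge al) smo)\<^sup>*"
proof
  assume "(LT_emb b (Inl d), LT_emb b (Inl e)) \<in> (map_rel LH (LT_edge al) smo)\<^sup>*"
  then obtain m where "noncrossing_matching n m"
    "(Inl (Inl d), Inl (Inl e)) \<in> (map_rel (cl_darts n C) (cl_edge al m) smc)\<^sup>*"
    using closure_connects[OF sm arcs smc] LT_path_cases[OF sm smo] de by (metis tdarts_Inl)
  then show False
    using separated by blast
qed

abbreviation "LsA \<equiv> smoothA LH (LT_rot C sg) (LT_over Ov)"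
abbreviation "LsAinv \<equiv> smoothAinv LH (LT_rot C sg) (LT_over Ov)"

lemma LT_rot_simps [simp]:
  "LT_rot C sg (Inl (Inl d)) = Inl (Inl (sg d))"
  "LT_rot C sg (Inl (Inr d)) = Inl (Inr (A.sg_inv d))"
  "LT_rot C sg (Inr (j, b)) = Inr (j, \<not> b)"
  by (simp_all add: LT_rot_def A.sg_inv_def)

lemma LT_over_simps [simp]:
  "Inl (Inl d) \<in> LT_over Ov \<longleftrightarrow> d \<in> Ov" "Inl (Inr d) \<in> LT_over Ov \<longleftrightarrow> d \<in> Ov"
  "Inr p \<notin> LT_over Ov"
  by (auto simp: LT_over_def)

lemma sg_inv_sg_inv_ne: "d \<in> C \<Longrightarrow> A.sg_inv (A.sg_inv d) \<noteq> d"
  by (metis A.crossing A.sg_inv_in A.sg_sg_inv)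

lemma sg_inj: "sg u = sg v \<Longrightarrow> u \<in> C \<Longrightarrow> v \<in> C \<Longrightarrow> u = v"
  using A.sg_inv_sg by metis

lemma LT_rot_inv:
  assumes "d \<in> C"
  shows "inv_into LH (LT_rot C sg) (Inl (Inl d)) = Inl (Inl (A.sg_inv d))"
    and "inv_into LH (LT_rot C sg) (Inl (Inr d)) = Inl (Inr (sg d))"
proof -
  have sg_inv_inj: "u = v" if "A.sg_inv u = A.sg_inv v" "u \<in> C" "v \<in> C" for u v
    using that A.sg_sg_inv by metis
  have "inj_on (LT_rot C sg) LH"
    by (rule inj_onI) (auto simp: LT_darts_def dest: sg_inj sg_inv_inj)
  then show "inv_into LH (LT_rot C sg) (Inl (Inl d)) = Inl (Inl (A.sg_inv d))"
    "inv_into LH (LT_rot C sg) (Inl (Inr d)) = Inl (Inr (sg d))"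
    using assms by (auto intro!: inv_into_f_eq simp: LT_darts_def A.sg_inv_in A.sg_sg_inv A.sg_inv_sg
      A.sg_in)
qed

lemma LsA_simps:
  "d \<in> C \<Longrightarrow> LsA (LT_emb True (Inl d)) = LT_emb True (Inl (A.smooth d))"
  "d \<in> C \<Longrightarrow> LsA (LT_emb False (Inl d)) = LT_emb False (Inl (Ainv.smooth d))"
  "LsA (Inr (j, b)) = Inr (j, \<not> b)"
  by (auto simp: smoothA_def LT_rot_inv A.smooth_def Ainv.smooth_def Ainv.sg_inv_def
      A.sg_inv_def)

lemma LsAinv_simps:
  "d \<in> C \<Longrightarrow> LsAinv (LT_emb True (Inl d)) = LT_emb True (Inl (Ainv.smooth d))"
  "d \<in> C \<Longrightarrow> LsAinv (LT_emb False (Inl d)) = LT_emb False (Inl (A.smooth d))"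
  "LsAinv (Inr (j, b)) = Inr (j, \<not> b)"
  using A.crossing sg_inv_sg_inv_ne
  by (auto simp: smoothAinv_def LT_rot_inv A.smooth_def Ainv.smooth_def Ainv.sg_inv_def
      A.sg_inv_def)

lemma involution_on_LT_smoothing:
  assumes "\<And>d. d \<in> C \<Longrightarrow> smo (LT_emb True (Inl d)) = LT_emb True (Inl (f d))"
    and "\<And>d. d \<in> C \<Longrightarrow> smo (LT_emb False (Inl d)) = LT_emb False (Inl (g d))"
    and "\<And>j b. smo (Inr (j, b)) = Inr (j, \<not> b)"
    and "involution_on f C" "involution_on g C"
  shows "involution_on smo LH"
  unfolding involution_on_def
proof
  fix w assume "w \<in> LH"
  then obtain b z where z: "z \<in> X" "w = LT_emb b z"
    by (rule LT_darts_cases)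
  then show "smo w \<in> LH \<and> smo (smo w) = w"
    using assms LT_emb_in[of "Inl (f _)"] LT_emb_in[of "Inl (g _)"]
    by (cases z; cases b) (auto simp: involution_on_def LT_darts_def)
qed

lemma involution_on_LsA: "involution_on LsA LH"
  and involution_on_LsAinv: "involution_on LsAinv LH"
  using involution_on_LT_smoothing[OF LsA_simps involution_on_smooth]
    involution_on_LT_smoothing[OF LsAinv_simps involution_on_smooth(2,1)] by simp_all

abbreviation "CH \<equiv> cl_darts n C"

lemma cl_rot_simps [simp]:
  "cl_rot sg (Inl (Inl d)) = Inl (Inl (sg d))" "cl_rot sg (Inl (Inr j)) = Inr j"
  "cl_rot sg (Inr j) = Inl (Inr j)"
  by (simp_all add: cl_rot_def)

lemma cl_over_simps [simp]:
  "Inl (Inl d) \<in> cl_over Ov \<longleftrightarrow> d \<in> Ov" "Inl (Inr j) \<notin> cl_over Ov" "Inr j \<notin> cl_over Ov"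
  by (auto simp: cl_over_def)

lemma cl_rot_inv:
  assumes "d \<in> C"
  shows "inv_into CH (cl_rot sg) (Inl (Inl d)) = Inl (Inl (A.sg_inv d))"
proof -
  have "inj_on (cl_rot sg) CH"
    by (rule inj_onI) (auto simp: cl_darts_def tdarts_def dest: sg_inj)
  then show ?thesis
    using assms by (auto intro!: inv_into_f_eq simp: cl_darts_def A.sg_inv_in A.sg_sg_inv)
qed

lemma closure_smoothA_simps:
  "d \<in> C \<Longrightarrow> smoothA CH (cl_rot sg) (cl_over Ov) (Inl (Inl d)) = Inl (Inl (A.smooth d))"
  "smoothA CH (cl_rot sg) (cl_over Ov) (Inl (Inr j)) = Inr j"
  "smoothA CH (cl_rot sg) (cl_over Ov) (Inr j) = Inl (Inr j)"
  by (auto simp: smoothA_def cl_rot_inv A.smooth_def)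

lemma closure_smoothAinv_simps:
  "d \<in> C \<Longrightarrow> smoothAinv CH (cl_rot sg) (cl_over Ov) (Inl (Inl d)) = Inl (Inl (Ainv.smooth d))"
  "smoothAinv CH (cl_rot sg) (cl_over Ov) (Inl (Inr j)) = Inr j"
  "smoothAinv CH (cl_rot sg) (cl_over Ov) (Inr j) = Inl (Inr j)"
  using A.crossing by (auto simp: smoothAinv_def cl_rot_inv Ainv.smooth_def)

lemma closure_separated:
  assumes "adequate_tangle n C sg Ov al" "noncrossing_matching n m" "d \<in> Ov"
  shows "(Inl (Inl d), Inl (Inl (sg d)))
      \<notin> (map_rel CH (cl_edge al m) (smoothA CH (cl_rot sg) (cl_over Ov)))\<^sup>*"
    and "(Inl (Inl d), Inl (Inl (A.sg_inv d)))
      \<notin> (map_rel CH (cl_edge al m) (smoothAinv CH (cl_rot sg) (cl_over Ov)))\<^sup>*"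
proof -
  have "adequate CH (cl_edge al m) (cl_rot sg) (cl_over Ov)"
    using assms(1,2) unfolding adequate_tangle_def by blast
  then have A: "\<forall>h\<in>cl_over Ov.
      (h, cl_rot sg h) \<notin> (map_rel CH (cl_edge al m) (smoothA CH (cl_rot sg) (cl_over Ov)))\<^sup>*"
    and Ainv: "\<forall>h\<in>cl_over Ov. (h, inv_into CH (cl_rot sg) h)
      \<notin> (map_rel CH (cl_edge al m) (smoothAinv CH (cl_rot sg) (cl_over Ov)))\<^sup>*"
    unfolding adequate_def A_adequate_def Ainv_adequate_def same_circle_def by blast+
  have d: "Inl (Inl d) \<in> cl_over Ov"
    using assms(3) by simp
  show "(Inl (Inl d), Inl (Inl (sg d)))
      \<notin> (map_rel CH (cl_edge al m) (smoothA CH (cl_rot sg) (cl_over Ov)))\<^sup>*"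
    using A[rule_format, OF d] by simp
  show "(Inl (Inl d), Inl (Inl (A.sg_inv d)))
      \<notin> (map_rel CH (cl_edge al m) (smoothAinv CH (cl_rot sg) (cl_over Ov)))\<^sup>*"
    using Ainv[rule_format, OF d] cl_rot_inv[OF subsetD[OF Ov_sub assms(3)]] by simp
qed

lemma LT_A_adequate:
  assumes "adequate_tangle n C sg Ov al"
  shows "A_adequate LH (LT_edge al) (LT_rot C sg) (LT_over Ov)"
  unfolding A_adequate_def same_circle_def
proof
  fix h assume "h \<in> LT_over Ov"
  then obtain d where d: "d \<in> Ov" "d \<in> C"
    and h: "h = LT_emb True (Inl d) \<or> h = LT_emb False (Inl d)"
    using Ov_sub unfolding LT_over_def by auto
  from h show "(h, LT_rot C sg h) \<notin> (map_rel LH (LT_edge al) LsA)\<^sup>*"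
  proof
    assume "h = LT_emb True (Inl d)"
    then show ?thesis
      using LT_grey_segment_separated[OF involution_on_smooth(1) A.state_arc_parity LsA_simps(1)
          involution_on_LsA closure_smoothA_simps d(2) A.sg_in[OF d(2)]
          closure_separated(1)[OF assms _ d(1)]] by simp
  next
    assume "h = LT_emb False (Inl d)"
    then show ?thesis
      using LT_grey_segment_separated[OF involution_on_smooth(2) Ainv.state_arc_parity LsA_simps(2)
          involution_on_LsA closure_smoothAinv_simps d(2) A.sg_inv_in[OF d(2)]
          closure_separated(2)[OF assms _ d(1)]] by simp
  qed
qed

lemma LT_Ainv_adequate:
  assumes "adequate_tangle n C sg Ov al"
  shows "Ainv_adequate LH (LT_edge al) (LT_rot C sg) (LT_over Ov)"
  unfolding Ainv_adequate_def same_circle_def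
proof
  fix h assume "h \<in> LT_over Ov"
  then obtain d where d: "d \<in> Ov" "d \<in> C"
    and h: "h = LT_emb True (Inl d) \<or> h = LT_emb False (Inl d)"
    using Ov_sub unfolding LT_over_def by auto
  from h show "(h, inv_into LH (LT_rot C sg) h) \<notin> (map_rel LH (LT_edge al) LsAinv)\<^sup>*"
  proof
    assume "h = LT_emb True (Inl d)"
    then show ?thesis
      using LT_grey_segment_separated[OF involution_on_smooth(2) Ainv.state_arc_parity
          LsAinv_simps(1) involution_on_LsAinv closure_smoothAinv_simps d(2) A.sg_inv_in[OF d(2)]
          closure_separated(2)[OF assms _ d(1)]] LT_rot_inv(1)[OF d(2)] by simp
  next
    assume "h = LT_emb False (Inl d)"
    then show ?thesis
      using LT_grey_segment_separated[OF involution_on_smooth(1) A.state_arc_parity LsAinv_simps(2)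
          involution_on_LsAinv closure_smoothA_simps d(2) A.sg_in[OF d(2)]
          closure_separated(1)[OF assms _ d(1)]] LT_rot_inv(2)[OF d(2)] by simp
  qed
qed

end

theorem mainTheorem1:
  fixes n :: nat and C :: "'d set" and sg :: "'d \<Rightarrow> 'd" and Ov :: "'d set"
    and al :: "'d + nat \<Rightarrow> 'd + nat"
  assumes "tangle_diagram n C sg Ov al"
    and "adequate_tangle n C sg Ov al"
  shows "adequate (LT_darts n C) (LT_edge al) (LT_rot C sg) (LT_over Ov)"
proof (cases "n = 0")
  case True
  then have "C = {}"
    using assms(1) unfolding tangle_diagram_def tdarts_def by auto
  moreover have "Ov \<subseteq> C"
    using assms(1) unfolding tangle_diagram_def by blast
  ultimately show ?thesis
    unfolding adequate_def A_adequate_def Ainv_adequate_def LT_over_def by simp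
next
  case False
  then interpret tangle n C sg Ov al
    using assms(1) by unfold_locales simp_all
  show ?thesis
    unfolding adequate_def using LT_A_adequate LT_Ainv_adequate assms(2) by blast
qed

end
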